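(* Let $P$ and $P'$ be programs over a propositional signature $\Sigma$ and $q\in\Sigma$. If $P$ and $P'$ are strongly equivalent, then $f_{SP}(P,q)$ and $f_{SP}(P',q)$ are strongly equivalent.
   Context: A program over $\Sigma$ is a finite set of rules $r$ of the form $a_1\vee\dots\vee a_k\leftarrow b_1,\dots,b_l,\ not\,c_1,\dots,not\,c_m,\ not\,not\,d_1,\dots,not\,not\,d_n$ with atoms in $\Sigma$; write $H(r)=\{a_i\}$, $B^+(r)=\{b_i\}$, $B^-(r)=\{c_i\}$, $B^{--}(r)=\{d_i\}$, $B(r)=B^+(r)\cup\{not\,c: c\in B^-(r)\}\cup\{not\,not\,d:d\in B^{--}(r)\}$ (elements of $B(r)$ are literals); a rule is written $H(r)\leftarrow B(r)$. $\Sigma(r)$, $\Sigma(P)$ are the atoms occurring in $r$, $P$. Reduct: $P^I=\{H(r)\leftarrow B^+(r): r\in P, B^-(r)\cap I=\emptyset, B^{--}(r)\subseteq I\}$. $I$ classically satisfies $r$ if $B^+(r)\subseteq I$, $B^-(r)\cap I=\emptyset$, $B^{--}(r)\subseteq I$ imply $H(r)\cap I\ne\emptyset$. An HT-interpretation $\langle X,Y\rangle$ ($X\subseteq Y$) is an HT-model of $P$ if $Y$ classically satisfies all rules of $P$ and $X$ all rules of $P^Y$. $Y$ is an answer set of $P$ if $\langle Y,Y\rangle$ is an HT-model and no $\langle X,Y\rangle$ with $X\subsetneq Y$ is; $AS(P)$ is the set of answer sets. $P_1,P_2$ are strongly equivalent if $AS(P_1\cup R)=AS(P_2\cup R)$ for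 every program $R$. Normal form: $r$ is tautological if $H(r)\cap B^+(r)\ne\emptyset$ or $B^+(r)\cap B^-(r)\ne\emptyset$ or $B^-(r)\cap B^{--}(r)\ne\emptyset$; $r\in P$ is minimal in $P$ if no $r'\in P$ has ($H(r')\subseteq H(r)$ and $B(r')\subsetneq B(r)$) or ($H(r')\subsetneq H(r)$ and $B(r')\subseteq B(r)$). $NF(P)$ is obtained by: 1. removing tautological rules; 2. removing from $B^{--}(r)$ atoms in $B^+(r)$; 3. removing from $H(r)$ atoms in $B^-(r)$; 4. removing rules not minimal in the resulting program. Notation: for a set $S$ of literals, $not\,(S)=\{not\,s:s\in S\}$, $not\,not\,(S)=\{not\,not\,s:s\in S\}$, simplifying $not\,not\,not\,p=not\,p$ and $not\,not\,not\,not\,p=not\,not\,p$. $B^{\setminus q}(r)=B(r)\setminus\{q,not\,q,not\,not\,q\}$, $H^{\setminus q}(r)=H(r)\setminus\{q\}$. For a set of rules $Q$, $D_q(Q)$ is the set of all sets $not\,(\{l_1,\dots,l_m\})\cup not\,not\,(\{l_{m+1},\dots,l_n\})$ where $\langle\{r_1,\dots,r_m\},\{r_{m+1},\dots,r_n\}\rangle$ is a partition of $Q$ (parts possibly empty), $l_i\in B^{\setminus q}(r_i)$ for $i\le m$, $l_j\in H^{\setminus q}(r_j)$ for $j>m$ (so $D_q(\emptyset)=\{\emptyset\}$). The operator $f_{SP}$: let $P'=NF(P)$, $R=\{r\in P': q\notin\Sigma(r)\}$, $R_0=\{r\in P':q\in B(r)\}$, $R_1=\{r\in P': not\,q\in B(r)\}$,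 $R_2=\{r\in P': not\,not\,q\in B(r), q\notin H(r)\}$, $R_3=\{r\in P': not\,not\,q\in B(r), q\in H(r)\}$, $R_4=\{r\in P': not\,not\,q\notin B(r), q\in H(r)\}$. $P''$ consists of: every $r\in R$; and (1a) for $r_0\in R_0$, $r_4\in R_4$: $H(r_0)\cup H^{\setminus q}(r_4)\leftarrow B^{\setminus q}(r_0)\cup B(r_4)$; (2a) for $r_0\in R_0$, $r_3\in R_3$, $r'\in R_1\cup R_4$: $H(r_0)\cup H^{\setminus q}(r_3)\leftarrow B^{\setminus q}(r_0)\cup B^{\setminus q}(r_3)\cup not\,(H^{\setminus q}(r'))\cup not\,not\,(B^{\setminus q}(r'))$; (3a) for $r_0\in R_0$, $r_3\in R_3$, $h\in H(r_0)$, $D\in D_q((R_0\cup R_2)\setminus\{r_0\})$: $H(r_0)\leftarrow B^{\setminus q}(r_0)\cup\{not\,not\,h\}\cup D\cup B^{\setminus q}(r_3)\cup not\,(H^{\setminus q}(r_3))$; (1b) for $r_2\in R_2$, $r_4\in R_4$: $H(r_2)\leftarrow B^{\setminus q}(r_2)\cup not\,(H^{\setminus q}(r_4))\cup not\,not\,(B(r_4))$; (2b) for $r_2\in R_2$, $r_3\in R_3$, $r'\in R_1\cup R_4$: $H(r_2)\leftarrow B^{\setminus q}(r_2)\cup not\,(H^{\setminus q}(r_3)\cup H^{\setminus q}(r'))\cup not\,not\,(B^{\setminus q}(r_3)\cup B^{\setminus q}(r'))$; (3b) for $r_2\in R_2$, $r_3\in R_3$, $h\in H(r_2)$, $D\in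 D_q((R_0\cup R_2)\setminus\{r_2\})$: $H(r_2)\leftarrow B^{\setminus q}(r_2)\cup not\,(H^{\setminus q}(r_3))\cup not\,not\,(B^{\setminus q}(r_3)\cup\{h\})\cup D$; (4) for $r'\in R_1\cup R_4$, $D\in D_q(R_3\cup R_4)$ with $D\cap not\,(B^{\setminus q}(r'))=\emptyset$: $H^{\setminus q}(r')\leftarrow B^{\setminus q}(r')\cup D$; (5) for $r'\in R_1\cup R_4$, $r_3\in R_3$, $r\in R_0\cup R_2$, $D\in D_q(R_4)$ with $D\cap not\,(B^{\setminus q}(r'))=\emptyset$: $H^{\setminus q}(r')\leftarrow B^{\setminus q}(r')\cup not\,(H(r)\cup H^{\setminus q}(r_3))\cup not\,not\,(B^{\setminus q}(r)\cup B^{\setminus q}(r_3))\cup D$; (6) for $r'\in R_1\cup R_4$, $r_3\in R_3$, $h\in H^{\setminus q}(r')$, $D\in D_q((R_1\cup R_4)\setminus\{r'\})$: $H^{\setminus q}(r')\leftarrow B^{\setminus q}(r')\cup not\,(H^{\setminus q}(r_3))\cup not\,not\,(B^{\setminus q}(r_3)\cup\{h\})\cup D$; (7) for $r_0\in R_0$, $r_3,r_3'\in R_3$ with $r_3\ne r_3'$, $D\in D_q((R_0\cup R_2)\setminus\{r_0\})$, $h\in H(r_0)$: $H(r_0)\cup H^{\setminus q}(r_3)\leftarrow B^{\setminus q}(r_0)\cup B^{\setminus q}(r_3)\cup not\,(H^{\setminus q}(r_3'))\cup not\,not\,(B^{\setminus q}(r_3')\cup\{h\})\cup D$. Then $f_{SP}(P,q)=NF(P'')$.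 *)

theory Defs
  imports Main
begin

datatype 'a lit = LPos 'a | LNot 'a | LNotNot 'a

text \<open>A rule is represented as the pair (H(r), B(r)) of its head (a set of atoms)
  and its body (a set of literals); the atom type 'a plays the role of the signature.\<close>
type_synonym 'a rule = "'a set \<times> 'a lit set"

definition H :: "'a rule \<Rightarrow> 'a set" where "H r = fst r"
definition B :: "'a rule \<Rightarrow> 'a lit set" where "B r = snd r"
definition Bpos :: "'a rule \<Rightarrow> 'a set" where "Bpos r = {a. LPos a \<in> B r}"
definition Bneg :: "'a rule \<Rightarrow> 'a set" where "Bneg r = {a. LNot a \<in> B r}"
definition Bnn :: "'a rule \<Rightarrow> 'a set" where "Bnn r = {a. LNotNot a \<in> B r}"

definition is_program :: "'a rule set \<Rightarrow> bool" where
  "is_program P \<longleftrightarrow> finite P \<and> (\<forall>r\<in>P. finite (H r) \<and> finite (B r))"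

definition csat :: "'a set \<Rightarrow> 'a rule \<Rightarrow> bool" where
  "csat I r \<longleftrightarrow> (Bpos r \<subseteq> I \<and> Bneg r \<inter> I = {} \<and> Bnn r \<subseteq> I \<longrightarrow> H r \<inter> I \<noteq> {})"

definition reduct :: "'a rule set \<Rightarrow> 'a set \<Rightarrow> 'a rule set" where
  "reduct P I = {(H r, LPos ` Bpos r) | r. r \<in> P \<and> Bneg r \<inter> I = {} \<and> Bnn r \<subseteq> I}"

definition ht_model :: "'a set \<Rightarrow> 'a set \<Rightarrow> 'a rule set \<Rightarrow> bool" where
  "ht_model X Y P \<longleftrightarrow> X \<subseteq> Y \<and> (\<forall>r\<in>P. csat Y r) \<and> (\<forall>r\<in>reduct P Y. csat X r)"

definition answer_set :: "'a rule set \<Rightarrow> 'a set \<Rightarrow> bool" where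
  "answer_set P Y \<longleftrightarrow> ht_model Y Y P \<and> \<not> (\<exists>X. X \<subset> Y \<and> ht_model X Y P)"

definition AS :: "'a rule set \<Rightarrow> 'a set set" where
  "AS P = {Y. answer_set P Y}"

definition strongly_equivalent :: "'a rule set \<Rightarrow> 'a rule set \<Rightarrow> bool" where
  "strongly_equivalent P1 P2 \<longleftrightarrow> (\<forall>R. is_program R \<longrightarrow> AS (P1 \<union> R) = AS (P2 \<union> R))"

definition tautological :: "'a rule \<Rightarrow> bool" where
  "tautological r \<longleftrightarrow> H r \<inter> Bpos r \<noteq> {} \<or> Bpos r \<inter> Bneg r \<noteq> {} \<or> Bneg r \<inter> Bnn r \<noteq> {}"

definition minimal_in :: "'a rule \<Rightarrow> 'a rule set \<Rightarrow> bool" where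
  "minimal_in r P \<longleftrightarrow> \<not> (\<exists>r'\<in>P. (H r' \<subseteq> H r \<and> B r' \<subset> B r) \<or> (H r' \<subset> H r \<and> B r' \<subseteq> B r))"

text \<open>Steps 2 and 3 of the normal form (removing from B--(r) atoms of B+(r), and
  from H(r) atoms of B-(r)).\<close>
definition nf_simp :: "'a rule \<Rightarrow> 'a rule" where
  "nf_simp r = (H r - Bneg r, B r - LNotNot ` Bpos r)"

definition NF :: "'a rule set \<Rightarrow> 'a rule set" where
  "NF P = (let P1 = nf_simp ` {r \<in> P. \<not> tautological r} in {r \<in> P1. minimal_in r P1})"

text \<open>not(l) and not not(l) on literals, with not not not p = not p and
  not not not not p = not not p.\<close>
fun lnot :: "'a lit \<Rightarrow> 'a lit" where
  "lnot (LPos a) = LNot a"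
| "lnot (LNot a) = LNotNot a"
| "lnot (LNotNot a) = LNot a"

fun lnn :: "'a lit \<Rightarrow> 'a lit" where
  "lnn (LPos a) = LNotNot a"
| "lnn (LNot a) = LNot a"
| "lnn (LNotNot a) = LNotNot a"

definition Bq :: "'a \<Rightarrow> 'a rule \<Rightarrow> 'a lit set" where
  "Bq q r = B r - {LPos q, LNot q, LNotNot q}"

definition Hq :: "'a \<Rightarrow> 'a rule \<Rightarrow> 'a set" where
  "Hq q r = H r - {q}"

definition atoms_rule :: "'a rule \<Rightarrow> 'a set" where
  "atoms_rule r = H r \<union> Bpos r \<union> Bneg r \<union> Bnn r"

definition Dq :: "'a \<Rightarrow> 'a rule set \<Rightarrow> 'a lit set set" where
  "Dq q Q = {lnot ` (l1 ` Q1) \<union> LNotNot ` (l2 ` Q2) | Q1 Q2 l1 l2.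
      Q1 \<union> Q2 = Q \<and> Q1 \<inter> Q2 = {} \<and>
      (\<forall>r\<in>Q1. l1 r \<in> Bq q r) \<and> (\<forall>r\<in>Q2. l2 r \<in> Hq q r)}"

definition fSP :: "'a rule set \<Rightarrow> 'a \<Rightarrow> 'a rule set" where
  "fSP P q = (let
     P' = NF P;
     R  = {r \<in> P'. q \<notin> atoms_rule r};
     R0 = {r \<in> P'. LPos q \<in> B r};
     R1 = {r \<in> P'. LNot q \<in> B r};
     R2 = {r \<in> P'. LNotNot q \<in> B r \<and> q \<notin> H r};
     R3 = {r \<in> P'. LNotNot q \<in> B r \<and> q \<in> H r};
     R4 = {r \<in> P'. LNotNot q \<notin> B r \<and> q \<in> H r};
     S1a = {(H r0 \<union> Hq q r4, Bq q r0 \<union> B r4) | r0 r4. r0 \<in> R0 \<and> r4 \<in> R4};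
     S2a = {(H r0 \<union> Hq q r3,
              Bq q r0 \<union> Bq q r3 \<union> LNot ` Hq q r' \<union> lnn ` Bq q r')
            | r0 r3 r'. r0 \<in> R0 \<and> r3 \<in> R3 \<and> r' \<in> R1 \<union> R4};
     S3a = {(H r0, Bq q r0 \<union> {LNotNot h} \<union> D \<union> Bq q r3 \<union> LNot ` Hq q r3)
            | r0 r3 h D. r0 \<in> R0 \<and> r3 \<in> R3 \<and> h \<in> H r0 \<and> D \<in> Dq q ((R0 \<union> R2) - {r0})};
     S1b = {(H r2, Bq q r2 \<union> LNot ` Hq q r4 \<union> lnn ` B r4) | r2 r4. r2 \<in> R2 \<and> r4 \<in> R4};
     S2b = {(H r2, Bq q r2 \<union> LNot ` (Hq q r3 \<union> Hq q r') \<union> lnn ` (Bq q r3 \<union> Bq q r'))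
            | r2 r3 r'. r2 \<in> R2 \<and> r3 \<in> R3 \<and> r' \<in> R1 \<union> R4};
     S3b = {(H r2, Bq q r2 \<union> LNot ` Hq q r3 \<union> lnn ` (Bq q r3 \<union> {LPos h}) \<union> D)
            | r2 r3 h D. r2 \<in> R2 \<and> r3 \<in> R3 \<and> h \<in> H r2 \<and> D \<in> Dq q ((R0 \<union> R2) - {r2})};
     S4 = {(Hq q r', Bq q r' \<union> D)
            | r' D. r' \<in> R1 \<union> R4 \<and> D \<in> Dq q (R3 \<union> R4) \<and> D \<inter> lnot ` Bq q r' = {}};
     S5 = {(Hq q r', Bq q r' \<union> LNot ` (H r \<union> Hq q r3) \<union> lnn ` (Bq q r \<union> Bq q r3) \<union> D)
            | r' r3 r D. r' \<in> R1 \<union> R4 \<and> r3 \<in> R3 \<and> r \<in> R0 \<union> R2 \<and> D \<in> Dq q R4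
                 \<and> D \<inter> lnot ` Bq q r' = {}};
     S6 = {(Hq q r', Bq q r' \<union> LNot ` Hq q r3 \<union> lnn ` (Bq q r3 \<union> {LPos h}) \<union> D)
            | r' r3 h D. r' \<in> R1 \<union> R4 \<and> r3 \<in> R3 \<and> h \<in> Hq q r'
                 \<and> D \<in> Dq q ((R1 \<union> R4) - {r'})};
     S7 = {(H r0 \<union> Hq q r3,
              Bq q r0 \<union> Bq q r3 \<union> LNot ` Hq q r3' \<union> lnn ` (Bq q r3' \<union> {LPos h}) \<union> D)
            | r0 r3 r3' D h. r0 \<in> R0 \<and> r3 \<in> R3 \<and> r3' \<in> R3 \<and> r3 \<noteq> r3'
                 \<and> D \<in> Dq q ((R0 \<union> R2) - {r0}) \<and> h \<in> H r0};
     P'' = R \<union> S1a \<union> S2a \<union> S3a \<union> S1b \<union> S2b \<union> S3b \<union> S4 \<union> S5 \<union> S6 \<union> S7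
   in NF P'')"

end

(*
  Strong equivalence of programs amounts to having the same HT-models (Lifschitz, Pearce and
  Valverde), and the normal form does not change HT-models, so it suffices that the HT-models
  of f_SP(P,q) are determined by those of P. The rules of f_SP(P,q) do not mention q, and for
  q not in Y, writing Z+q for Z \<union> {q}, the interpretation <X,Y> is an HT-model of f_SP(P,q) iff
    - <Y,Y> is an HT-model of P, or <Y+q,Y+q> is one and <Y,Y+q> is not;
    - if <Y,Y> is an HT-model of P, then so is <X,Y>;
    - if <Y+q,Y+q> is an HT-model of P and <Y,Y+q> is not, then <X,Y+q> or <X+q,Y+q> is one.
  To see this, split the normal form of P into classes according to how q occurs in a rule.
  HT-satisfaction of P at the six interpretations above, and of each rule group of f_SP at
  <X,Y>, then become propositional conditions on which q-free bodies hold and which q-free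
  heads meet X and Y, and a case analysis on the violated rules shows that the two sets of
  conditions are equivalent.
*)

theory Submission
  imports Defs "HOL-Library.Product_Order"
begin

section \<open>HT-satisfaction rule by rule\<close>

fun lit_there :: "'a set \<Rightarrow> 'a lit \<Rightarrow> bool" where
  "lit_there Y (LPos a) \<longleftrightarrow> a \<in> Y"
| "lit_there Y (LNot a) \<longleftrightarrow> a \<notin> Y"
| "lit_there Y (LNotNot a) \<longleftrightarrow> a \<in> Y"

fun lit_here :: "'a set \<Rightarrow> 'a set \<Rightarrow> 'a lit \<Rightarrow> bool" where
  "lit_here X Y (LPos a) \<longleftrightarrow> a \<in> X"
| "lit_here X Y (LNot a) \<longleftrightarrow> a \<notin> Y"
| "lit_here X Y (LNotNot a) \<longleftrightarrow> a \<in> Y"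

definition ht_sat :: "'a set \<Rightarrow> 'a set \<Rightarrow> 'a rule \<Rightarrow> bool" where
  "ht_sat X Y r \<longleftrightarrow>
     ((\<forall>l\<in>B r. lit_there Y l) \<longrightarrow> H r \<inter> Y \<noteq> {}) \<and> ((\<forall>l\<in>B r. lit_here X Y l) \<longrightarrow> H r \<inter> X \<noteq> {})"

lemma lit_here_same: "lit_here Y Y l = lit_there Y l"
  by (cases l) auto

lemma lit_here_imp_there: "X \<subseteq> Y \<Longrightarrow> lit_here X Y l \<Longrightarrow> lit_there Y l"
  by (cases l) auto

lemma Ball_lit_there_iff: "(\<forall>l\<in>B r. lit_there Y l) \<longleftrightarrow> Bpos r \<subseteq> Y \<and> Bneg r \<inter> Y = {} \<and> Bnn r \<subseteq> Y"
  unfolding Bpos_def Bneg_def Bnn_def by auto (case_tac l, auto)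

lemma Ball_lit_here_iff: "(\<forall>l\<in>B r. lit_here X Y l) \<longleftrightarrow> Bpos r \<subseteq> X \<and> Bneg r \<inter> Y = {} \<and> Bnn r \<subseteq> Y"
  unfolding Bpos_def Bneg_def Bnn_def by auto (case_tac l, auto)

lemma ht_model_iff: "ht_model X Y P \<longleftrightarrow> X \<subseteq> Y \<and> (\<forall>r\<in>P. ht_sat X Y r)"
proof -
  have "(\<forall>r'\<in>reduct P Y. csat X r') \<longleftrightarrow>
      (\<forall>r\<in>P. Bneg r \<inter> Y = {} \<and> Bnn r \<subseteq> Y \<longrightarrow> csat X (H r, LPos ` Bpos r))"
    unfolding reduct_def by blast
  moreover have "csat X (H r, LPos ` Bpos r) \<longleftrightarrow> (Bpos r \<subseteq> X \<longrightarrow> H r \<inter> X \<noteq> {})" for r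
    unfolding csat_def by (auto simp: Bpos_def Bneg_def Bnn_def B_def H_def)
  moreover have "csat Y r \<longleftrightarrow> ((\<forall>l\<in>B r. lit_there Y l) \<longrightarrow> H r \<inter> Y \<noteq> {})" for r
    unfolding csat_def Ball_lit_there_iff ..
  ultimately show ?thesis
    unfolding ht_model_def ht_sat_def Ball_lit_here_iff by auto
qed

lemma ht_sat_mono: "H r' \<subseteq> H r \<Longrightarrow> B r' \<subseteq> B r \<Longrightarrow> ht_sat X Y r' \<Longrightarrow> ht_sat X Y r"
  unfolding ht_sat_def by blast

lemma ht_sat_tautological: "X \<subseteq> Y \<Longrightarrow> tautological r \<Longrightarrow> ht_sat X Y r"
  unfolding ht_sat_def Ball_lit_there_iff Ball_lit_here_iff tautological_def by blast

lemma B_nf_simp: "B (nf_simp r) = B r - LNotNot ` Bpos r"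
  and H_nf_simp: "H (nf_simp r) = H r - Bneg r"
  unfolding nf_simp_def B_def H_def by simp_all

lemma ht_sat_nf_simp: "X \<subseteq> Y \<Longrightarrow> ht_sat X Y (nf_simp r) \<longleftrightarrow> ht_sat X Y r"
  unfolding ht_sat_def Ball_lit_there_iff Ball_lit_here_iff H_nf_simp
  by (auto simp: Bpos_def Bneg_def Bnn_def B_nf_simp)

lemma rule_le_iff: "(r' :: 'a rule) \<le> r \<longleftrightarrow> H r' \<subseteq> H r \<and> B r' \<subseteq> B r"
  by (simp add: less_eq_prod_def H_def B_def)

lemma minimal_in_iff: "minimal_in r P \<longleftrightarrow> \<not> (\<exists>r'\<in>P. r' < r)"
  unfolding minimal_in_def less_le_not_le rule_le_iff by blast

lemma ht_model_NF:
  assumes "finite P"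
  shows "ht_model X Y (NF P) \<longleftrightarrow> ht_model X Y P"
proof (cases "X \<subseteq> Y")
  case XY: True
  define P1 where "P1 = nf_simp ` {r \<in> P. \<not> tautological r}"
  have NF_eq: "NF P = {r \<in> P1. minimal_in r P1}"
    unfolding NF_def P1_def Let_def by simp
  have "finite P1"
    unfolding P1_def using assms by simp
  have "ht_sat X Y r" if NF_sat: "\<forall>r\<in>NF P. ht_sat X Y r" and "r \<in> P" for r
  proof (cases "tautological r")
    case False
    then have "nf_simp r \<in> P1"
      unfolding P1_def using \<open>r \<in> P\<close> by blast
    then obtain m where "m \<in> P1" "m \<le> nf_simp r" "\<forall>m'\<in>P1. m' \<le> m \<longrightarrow> m = m'"
      using finite_has_minimal2[OF \<open>finite P1\<close>] by blast
    then have "m \<in> NF P"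
      unfolding NF_eq minimal_in_iff less_le_not_le by blast
    then have "ht_sat X Y (nf_simp r)"
      using NF_sat \<open>m \<le> nf_simp r\<close> ht_sat_mono unfolding rule_le_iff by blast
    then show ?thesis
      using ht_sat_nf_simp[OF XY] by blast
  qed (use XY ht_sat_tautological in blast)
  moreover have "\<forall>r\<in>NF P. ht_sat X Y r" if "\<forall>r\<in>P. ht_sat X Y r"
    using that ht_sat_nf_simp[OF XY] unfolding NF_eq P1_def by blast
  ultimately show ?thesis
    unfolding ht_model_iff by blast
qed (simp add: ht_model_iff)

section \<open>Strong equivalence is equivalence in HT-models\<close>

lemma ht_model_Un: "ht_model X Y (P \<union> Q) \<longleftrightarrow> ht_model X Y P \<and> ht_model X Y Q"
  unfolding ht_model_iff by blast

lemma ht_model_there: "ht_model X Y P \<Longrightarrow> ht_model Y Y P"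
  unfolding ht_model_iff ht_sat_def by (simp add: lit_here_same)

lemma strongly_equivalent_if_same_ht_models:
  assumes "\<And>X Y. ht_model X Y P1 \<longleftrightarrow> ht_model X Y P2"
  shows "strongly_equivalent P1 P2"
  unfolding strongly_equivalent_def AS_def answer_set_def ht_model_Un assms by simp

fun atom_of :: "'a lit \<Rightarrow> 'a" where
  "atom_of (LPos a) = a"
| "atom_of (LNot a) = a"
| "atom_of (LNotNot a) = a"

lemma atoms_rule_eq: "atoms_rule r = H r \<union> atom_of ` B r"
proof -
  have "atom_of ` B r = Bpos r \<union> Bneg r \<union> Bnn r"
  proof (intro equalityI subsetI)
    fix a assume "a \<in> atom_of ` B r"
    then obtain l where "l \<in> B r" "a = atom_of l"
      by blast
    then show "a \<in> Bpos r \<union> Bneg r \<union> Bnn r"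
      unfolding Bpos_def Bneg_def Bnn_def by (cases l) auto
  qed (auto simp: Bpos_def Bneg_def Bnn_def intro: rev_image_eqI)
  then show ?thesis
    unfolding atoms_rule_def by blast
qed

definition atoms_prog :: "'a rule set \<Rightarrow> 'a set" where
  "atoms_prog P = \<Union> (atoms_rule ` P)"

lemma finite_atoms_prog: "is_program P \<Longrightarrow> finite (atoms_prog P)"
  unfolding is_program_def atoms_prog_def atoms_rule_eq by (simp add: finite_UN)

lemma ht_sat_restrict:
  assumes "atoms_rule r \<subseteq> A"
  shows "ht_sat (X \<inter> A) (Y \<inter> A) r \<longleftrightarrow> ht_sat X Y r"
proof -
  have "lit_there (Y \<inter> A) l = lit_there Y l \<and> lit_here (X \<inter> A) (Y \<inter> A) l = lit_here X Y l"
    if "l \<in> B r" for l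
  proof -
    have "atom_of l \<in> A"
      using that assms unfolding atoms_rule_eq by blast
    then show ?thesis
      by (cases l) auto
  qed
  moreover have "H r \<inter> (Y \<inter> A) = H r \<inter> Y" "H r \<inter> (X \<inter> A) = H r \<inter> X"
    using assms unfolding atoms_rule_eq by blast+
  ultimately show ?thesis
    unfolding ht_sat_def by simp
qed

lemma ht_model_restrict:
  assumes "atoms_prog P \<subseteq> A" and "X \<subseteq> Y"
  shows "ht_model (X \<inter> A) (Y \<inter> A) P \<longleftrightarrow> ht_model X Y P"
proof -
  have "ht_sat (X \<inter> A) (Y \<inter> A) r \<longleftrightarrow> ht_sat X Y r" if "r \<in> P" for r
  proof (rule ht_sat_restrict)
    show "atoms_rule r \<subseteq> A"
      using assms(1) that unfolding atoms_prog_def by blast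
  qed
  moreover have "X \<inter> A \<subseteq> Y \<inter> A"
    using assms(2) by blast
  ultimately show ?thesis
    unfolding ht_model_iff using assms(2) by blast
qed

lemma ht_sat_fact_iff: "ht_sat X Y ({a}, {}) \<longleftrightarrow> a \<in> Y \<and> a \<in> X"
  unfolding ht_sat_def by (simp add: B_def H_def)

lemma ht_sat_implication_iff: "ht_sat X Y ({a}, {LPos b}) \<longleftrightarrow> (b \<in> Y \<longrightarrow> a \<in> Y) \<and> (b \<in> X \<longrightarrow> a \<in> X)"
  unfolding ht_sat_def by (simp add: B_def H_def)

text \<open>The witness programs below are the ones of Lifschitz, Pearce and Valverde: the facts
  \<open>Y\<close> separate the total models, and the facts \<open>X\<close> together with all rules \<open>a \<leftarrow> b\<close>
  on \<open>Y - X\<close> make \<open>X\<close> the only possible smaller model of \<open>Y\<close>.\<close>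

lemma ht_model_total_if_strongly_equivalent:
  assumes se: "strongly_equivalent P1 P2" and "finite Y" and "ht_model Y Y P1"
  shows "ht_model Y Y P2"
proof -
  define R where "R = (\<lambda>a. ({a}, {} :: 'a lit set)) ` Y"
  have "is_program R"
    unfolding R_def is_program_def using \<open>finite Y\<close> by (auto simp: H_def B_def)
  have R_models: "ht_model Z Y R \<longleftrightarrow> Z = Y" for Z
    unfolding ht_model_iff R_def by (auto simp: ht_sat_fact_iff)
  have "Y \<in> AS (P1 \<union> R)"
    unfolding AS_def answer_set_def ht_model_Un using assms(3) R_models by auto
  then have "Y \<in> AS (P2 \<union> R)"
    using se \<open>is_program R\<close> unfolding strongly_equivalent_def by blast
  then show ?thesis
    unfolding AS_def answer_set_def ht_model_Un by blast
qed

lemma ht_model_if_strongly_equivalent_finite: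
  assumes se: "strongly_equivalent P1 P2" and "finite Y"
    and model1: "ht_model X Y P1" and total2: "ht_model Y Y P2"
  shows "ht_model X Y P2"
proof (rule ccontr)
  assume not_model2: "\<not> ht_model X Y P2"
  have "X \<subseteq> Y"
    using model1 unfolding ht_model_iff by blast
  define R where
    "R = (\<lambda>a. ({a}, {} :: 'a lit set)) ` X \<union> (\<lambda>(a, b). ({a}, {LPos b})) ` ((Y - X) \<times> (Y - X))"
  have "is_program R"
    unfolding R_def is_program_def using \<open>finite Y\<close> \<open>X \<subseteq> Y\<close> finite_subset
    by (auto simp: H_def B_def)
  have "(\<forall>r\<in>R. ht_sat Z Y r) \<longleftrightarrow>
      (\<forall>a\<in>X. ht_sat Z Y ({a}, {})) \<and> (\<forall>a\<in>Y - X. \<forall>b\<in>Y - X. ht_sat Z Y ({a}, {LPos b}))" for Z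
    unfolding R_def ball_Un by auto
  then have R_models:
    "ht_model Z Y R \<longleftrightarrow> Z \<subseteq> Y \<and> X \<subseteq> Z \<and> (\<forall>a\<in>Y - X. \<forall>b\<in>Y - X. b \<in> Z \<longrightarrow> a \<in> Z)" for Z
    unfolding ht_model_iff ht_sat_fact_iff ht_sat_implication_iff using \<open>X \<subseteq> Y\<close> by auto
  have "Y \<in> AS (P2 \<union> R)"
    unfolding AS_def answer_set_def ht_model_Un
  proof (intro CollectI conjI notI)
    show "ht_model Y Y P2" "ht_model Y Y R"
      using total2 R_models \<open>X \<subseteq> Y\<close> by blast+
    assume "\<exists>Z. Z \<subset> Y \<and> ht_model Z Y P2 \<and> ht_model Z Y R"
    then obtain Z where Z: "Z \<subset> Y" "ht_model Z Y P2" "ht_model Z Y R"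
      by blast
    have "Z = X"
      using Z(1,3) unfolding R_models by blast
    then show False
      using Z(2) not_model2 by blast
  qed
  then have "Y \<in> AS (P1 \<union> R)"
    using se \<open>is_program R\<close> unfolding strongly_equivalent_def by blast
  moreover have "X \<subset> Y"
    using \<open>X \<subseteq> Y\<close> not_model2 total2 by blast
  ultimately show False
    unfolding AS_def answer_set_def ht_model_Un using model1 R_models \<open>X \<subseteq> Y\<close> by blast
qed

lemma ht_model_if_strongly_equivalent:
  assumes "strongly_equivalent P1 P2" and "is_program P1" and "is_program P2"
  shows "ht_model X Y P1 \<longleftrightarrow> ht_model X Y P2"
proof -
  define A where "A = atoms_prog P1 \<union> atoms_prog P2"
  have "finite A"
    unfolding A_def using finite_atoms_prog assms(2,3) by blast
  have transfer: "ht_model X Y Q2"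
    if se: "strongly_equivalent Q1 Q2" and "atoms_prog Q1 \<subseteq> A" "atoms_prog Q2 \<subseteq> A"
      and model1: "ht_model X Y Q1"
    for Q1 Q2
  proof -
    have "X \<subseteq> Y"
      using model1 unfolding ht_model_iff by blast
    have "finite (Y \<inter> A)"
      using \<open>finite A\<close> by blast
    have "ht_model (X \<inter> A) (Y \<inter> A) Q1"
      using ht_model_restrict[OF \<open>atoms_prog Q1 \<subseteq> A\<close> \<open>X \<subseteq> Y\<close>] model1 by blast
    moreover have "ht_model (Y \<inter> A) (Y \<inter> A) Q2"
      using ht_model_total_if_strongly_equivalent[OF se \<open>finite (Y \<inter> A)\<close>]
        ht_model_there[OF calculation] .
    ultimately have "ht_model (X \<inter> A) (Y \<inter> A) Q2"
      by (rule ht_model_if_strongly_equivalent_finite[OF se \<open>finite (Y \<inter> A)\<close>])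
    then show ?thesis
      using ht_model_restrict[OF \<open>atoms_prog Q2 \<subseteq> A\<close> \<open>X \<subseteq> Y\<close>] by blast
  qed
  have "strongly_equivalent P2 P1"
    using assms(1) unfolding strongly_equivalent_def by metis
  then show ?thesis
    using transfer[of P1 P2] transfer[of P2 P1] assms(1) unfolding A_def by blast
qed

section \<open>The case analysis behind the HT-models of \<open>f\<^sub>S\<^sub>P\<close>\<close>

definition sat_on :: "('r \<Rightarrow> bool) \<Rightarrow> ('r \<Rightarrow> bool) \<Rightarrow> 'r set \<Rightarrow> bool" where
  "sat_on b h Q \<longleftrightarrow> (\<forall>r\<in>Q. b r \<longrightarrow> h r)"

lemma sat_on_Un: "sat_on b h (Q \<union> Q') \<longleftrightarrow> sat_on b h Q \<and> sat_on b h Q'"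
  unfolding sat_on_def by blast

lemma sat_on_Diff: "sat_on b h Q \<Longrightarrow> sat_on b h (Q - Q')"
  unfolding sat_on_def by blast

lemma sat_on_insert_Diff: "sat_on b h (Q - {r}) \<Longrightarrow> (b r \<longrightarrow> h r) \<Longrightarrow> sat_on b h Q"
  unfolding sat_on_def by blast

text \<open>An abstract view of a program split into the classes \<open>R, R\<^sub>0, \<dots>, R\<^sub>4\<close> of \<open>f\<^sub>S\<^sub>P\<close>,
  here \<open>C, C\<^sub>0, \<dots>, C\<^sub>4\<close>: \<open>bY r\<close> and \<open>bX r\<close> say that the \<open>q\<close>-free part of the body of \<open>r\<close>
  holds in the there- and in the here-world, \<open>hY r\<close> and \<open>hX r\<close> that its \<open>q\<close>-free head meets
  \<open>Y\<close> and \<open>X\<close>. For \<open>q \<notin> Y\<close>, the definitions \<open>model_\<dots>\<close> are what it means for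
  \<open>\<langle>Y,Y\<rangle>\<close>, \<open>\<langle>Y\<union>{q},Y\<union>{q}\<rangle>\<close>, \<open>\<langle>Y,Y\<union>{q}\<rangle>\<close>, \<open>\<langle>X,Y\<rangle>\<close>, \<open>\<langle>X,Y\<union>{q}\<rangle>\<close> and \<open>\<langle>X\<union>{q},Y\<union>{q}\<rangle>\<close>
  to be HT-models of the program, and \<open>cond_R, cond_1a, \<dots>, cond_7\<close> are what it means for
  \<open>\<langle>X,Y\<rangle>\<close> to satisfy the rules of \<open>R\<close> and of the groups (1a)--(7) of \<open>f\<^sub>S\<^sub>P\<close>.\<close>

locale rule_classes =
  fixes bY bX hY hX :: "'r \<Rightarrow> bool" and C C0 C1 C2 C3 C4 :: "'r set"
  assumes body_here_there: "bX r \<Longrightarrow> bY r" and head_here_there: "hX r \<Longrightarrow> hY r"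
begin

definition "model_Y \<longleftrightarrow> sat_on bY hY (C \<union> C1 \<union> C4)"
definition "model_Yq \<longleftrightarrow> sat_on bY hY (C \<union> C0 \<union> C2)"
definition "model_Y_Yq \<longleftrightarrow> model_Yq \<and> sat_on bY hY (C \<union> C2 \<union> C3 \<union> C4)"
definition "model_X_Y \<longleftrightarrow> model_Y \<and> sat_on bX hX (C \<union> C1 \<union> C4)"
definition "model_X_Yq \<longleftrightarrow> model_Yq \<and> sat_on bX hX (C \<union> C2 \<union> C3 \<union> C4)"
definition "model_Xq_Yq \<longleftrightarrow> model_Yq \<and> sat_on bX hX (C \<union> C0 \<union> C2)"

definition "forgotten_model \<longleftrightarrow>
  (model_Y \<or> model_Yq \<and> \<not> model_Y_Yq) \<and> (model_Y \<longrightarrow> model_X_Y) \<and>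
  (model_Yq \<and> \<not> model_Y_Yq \<longrightarrow> model_X_Yq \<or> model_Xq_Yq)"

definition "violated r \<longleftrightarrow> bY r \<and> \<not> hY r"

definition "cond_R \<longleftrightarrow> (\<forall>r\<in>C. (bY r \<longrightarrow> hY r) \<and> (bX r \<longrightarrow> hX r))"
definition "cond_1a \<longleftrightarrow> (\<forall>r0\<in>C0. \<forall>r4\<in>C4.
  (bY r0 \<and> bY r4 \<longrightarrow> hY r0 \<or> hY r4) \<and> (bX r0 \<and> bX r4 \<longrightarrow> hX r0 \<or> hX r4))"
definition "cond_2a \<longleftrightarrow> (\<forall>r0\<in>C0. \<forall>r3\<in>C3. \<forall>r'\<in>C1 \<union> C4.
  (bY r0 \<and> bY r3 \<and> violated r' \<longrightarrow> hY r0 \<or> hY r3) \<and> (bX r0 \<and> bX r3 \<and> violated r' \<longrightarrow> hX r0 \<or> hX r3))"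
definition "cond_3a \<longleftrightarrow> (\<forall>r0\<in>C0. \<forall>r3\<in>C3.
  hY r0 \<and> sat_on bY hY (C0 \<union> C2 - {r0}) \<and> \<not> hY r3 \<and> bX r0 \<and> bX r3 \<longrightarrow> hX r0)"
definition "cond_1b \<longleftrightarrow> (\<forall>r2\<in>C2. \<forall>r4\<in>C4.
  (bY r2 \<and> violated r4 \<longrightarrow> hY r2) \<and> (bX r2 \<and> violated r4 \<longrightarrow> hX r2))"
definition "cond_2b \<longleftrightarrow> (\<forall>r2\<in>C2. \<forall>r3\<in>C3. \<forall>r'\<in>C1 \<union> C4.
  (bY r2 \<and> violated r3 \<and> violated r' \<longrightarrow> hY r2) \<and> (bX r2 \<and> violated r3 \<and> violated r' \<longrightarrow> hX r2))"
definition "cond_3b \<longleftrightarrow> (\<forall>r2\<in>C2. \<forall>r3\<in>C3.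
  hY r2 \<and> violated r3 \<and> sat_on bY hY (C0 \<union> C2 - {r2}) \<and> bX r2 \<longrightarrow> hX r2)"
definition "cond_4 \<longleftrightarrow> (\<forall>r'\<in>C1 \<union> C4.
  (sat_on bY hY (C3 \<union> C4) \<and> bY r' \<longrightarrow> hY r') \<and> (sat_on bY hY (C3 \<union> C4) \<and> bX r' \<longrightarrow> hX r'))"
definition "cond_5 \<longleftrightarrow> (\<forall>r'\<in>C1 \<union> C4. \<forall>r3\<in>C3. \<forall>r\<in>C0 \<union> C2.
  (violated r \<and> violated r3 \<and> sat_on bY hY C4 \<and> bY r' \<longrightarrow> hY r') \<and>
  (violated r \<and> violated r3 \<and> sat_on bY hY C4 \<and> bX r' \<longrightarrow> hX r'))"
definition "cond_6 \<longleftrightarrow> (\<forall>r'\<in>C1 \<union> C4. \<forall>r3\<in>C3.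
  hY r' \<and> violated r3 \<and> sat_on bY hY (C1 \<union> C4 - {r'}) \<and> bX r' \<longrightarrow> hX r')"
definition "cond_7 \<longleftrightarrow> (\<forall>r0\<in>C0. \<forall>r3\<in>C3. \<forall>r3'\<in>C3. r3 \<noteq> r3' \<longrightarrow>
  (hY r0 \<and> violated r3' \<and> sat_on bY hY (C0 \<union> C2 - {r0}) \<and> bX r0 \<and> bX r3 \<longrightarrow> hX r0 \<or> hX r3))"

lemma not_model_Y_if_violated: "r \<in> C1 \<union> C4 \<Longrightarrow> violated r \<Longrightarrow> \<not> model_Y"
  unfolding model_Y_def violated_def sat_on_def by blast

lemma not_model_Yq_if_violated: "r \<in> C0 \<union> C2 \<Longrightarrow> violated r \<Longrightarrow> \<not> model_Yq"
  unfolding model_Yq_def violated_def sat_on_def by blast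

lemma not_model_Y_Yq_if_violated: "r \<in> C3 \<union> C4 \<Longrightarrow> violated r \<Longrightarrow> \<not> model_Y_Yq"
  unfolding model_Y_Yq_def violated_def sat_on_def by blast

context
  assumes R: cond_R and G1a: cond_1a and G2a: cond_2a and G3a: cond_3a and G1b: cond_1b
    and G3b: cond_3b and G4: cond_4 and G5: cond_5 and G6: cond_6 and G7: cond_7
begin

lemma C_rule_sat: "r \<in> C \<Longrightarrow> (bY r \<longrightarrow> hY r) \<and> (bX r \<longrightarrow> hX r)"
  using R unfolding cond_R_def by blast

lemma model_Y_or_strict_model_Yq: "model_Y \<or> model_Yq \<and> \<not> model_Y_Yq"
proof (rule ccontr)
  assume "\<not> (model_Y \<or> model_Yq \<and> \<not> model_Y_Yq)"
  then have "\<not> model_Y" and Yq: "\<not> model_Yq \<or> model_Y_Yq"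
    by auto
  then obtain ra where ra: "ra \<in> C1 \<union> C4" "violated ra"
    using C_rule_sat unfolding model_Y_def sat_on_def violated_def by blast
  then have "\<not> sat_on bY hY (C3 \<union> C4)"
    using G4 unfolding cond_4_def violated_def by blast
  then obtain r34 where r34: "r34 \<in> C3 \<union> C4" "violated r34"
    unfolding sat_on_def violated_def by blast
  then have "\<not> model_Yq"
    using Yq not_model_Y_Yq_if_violated by blast
  then obtain rb where rb: "rb \<in> C0 \<union> C2" "violated rb"
    using C_rule_sat unfolding model_Yq_def sat_on_def violated_def by blast
  show False
  proof (cases "\<exists>r4\<in>C4. violated r4")
    case True
    then show False
      using G1a G1b rb unfolding cond_1a_def cond_1b_def violated_def by blast
  next
    case False
    then have "sat_on bY hY C4" "r34 \<in> C3"
      using r34 unfolding sat_on_def violated_def by blast+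
    then show False
      using G5 ra rb r34 unfolding cond_5_def violated_def by blast
  qed
qed

lemma model_X_Y_if_model_Y:
  assumes model_Y
  shows model_X_Y
proof (rule ccontr)
  assume "\<not> model_X_Y"
  then obtain r where r: "r \<in> C1 \<union> C4" "bX r" "\<not> hX r"
    using assms C_rule_sat unfolding model_X_Y_def sat_on_def by blast
  have "hY r"
    using assms r body_here_there unfolding model_Y_def sat_on_def by blast
  have "\<not> sat_on bY hY (C3 \<union> C4)"
    using G4 r unfolding cond_4_def by blast
  then obtain r3 where "r3 \<in> C3" "violated r3"
    using assms unfolding model_Y_def sat_on_def violated_def by blast
  moreover have "sat_on bY hY (C1 \<union> C4 - {r})"
    using assms unfolding model_Y_def sat_on_def by blast
  ultimately show False
    using G6 r \<open>hY r\<close> unfolding cond_6_def by blast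
qed

context
  assumes Yq: model_Yq and not_Y_Yq: "\<not> model_Y_Yq"
begin

lemma violated_C3_C4: obtains r where "r \<in> C3 \<union> C4" "violated r"
  using Yq not_Y_Yq unfolding model_Y_Yq_def model_Yq_def sat_on_def violated_def by blast

lemma C0_C2_there_sat: "sat_on bY hY (C0 \<union> C2)"
  using Yq unfolding model_Yq_def sat_on_def by blast

lemma C2_here_sat:
  assumes "r \<in> C2" and "bX r"
  shows "hX r"
proof (cases "\<exists>r4\<in>C4. violated r4")
  case True
  then show ?thesis
    using G1b assms unfolding cond_1b_def by blast
next
  case False
  then obtain r3 where "r3 \<in> C3" "violated r3"
    using violated_C3_C4 by blast
  moreover have "hY r"
    using C0_C2_there_sat assms body_here_there unfolding sat_on_def by blast
  ultimately show ?thesis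
    using G3b assms sat_on_Diff[OF C0_C2_there_sat] unfolding cond_3b_def by blast
qed

lemma C3_C4_here_sat_if_C0_here_violated:
  assumes "r0 \<in> C0" "bX r0" "\<not> hX r0" and "r \<in> C3 \<union> C4" "bX r"
  shows "hX r"
proof -
  have "hY r0"
    using C0_C2_there_sat assms(1,2) body_here_there unfolding sat_on_def by blast
  have C0_C2_r0: "sat_on bY hY (C0 \<union> C2 - {r0})"
    using C0_C2_there_sat by (rule sat_on_Diff)
  consider "r \<in> C4" | "r \<in> C3" "\<exists>r4\<in>C4. violated r4" | r3 where "r \<in> C3" "r3 \<in> C3" "violated r3"
    using assms(4) violated_C3_C4 by blast
  then show ?thesis
  proof cases
    case 1
    then show ?thesis
      using G1a assms unfolding cond_1a_def by blast
  next
    case 2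
    then show ?thesis
      using G2a assms unfolding cond_2a_def by blast
  next
    case (3 r3)
    show ?thesis
    proof (cases "r3 = r")
      case True
      then show ?thesis
        using G3a 3 assms \<open>hY r0\<close> C0_C2_r0 unfolding cond_3a_def violated_def by blast
    next
      case False
      then have "r \<noteq> r3"
        by simp
      then show ?thesis
        using G7 3 assms \<open>hY r0\<close> C0_C2_r0 unfolding cond_7_def by blast
    qed
  qed
qed

lemma model_X_Yq_or_Xq_Yq: "model_X_Yq \<or> model_Xq_Yq"
proof (rule ccontr)
  assume "\<not> (model_X_Yq \<or> model_Xq_Yq)"
  then obtain r r0 where "r \<in> C \<union> C2 \<union> C3 \<union> C4" "bX r" "\<not> hX r"
    and "r0 \<in> C \<union> C0 \<union> C2" "bX r0" "\<not> hX r0"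
    using Yq unfolding model_X_Yq_def model_Xq_Yq_def sat_on_def by blast
  moreover from this have "r0 \<in> C0" "r \<in> C3 \<union> C4"
    using C_rule_sat C2_here_sat by blast+
  ultimately show False
    using C3_C4_here_sat_if_C0_here_violated by blast
qed

end

lemma forgotten_model_if_conds: forgotten_model
  unfolding forgotten_model_def
  using model_Y_or_strict_model_Yq model_X_Y_if_model_Y model_X_Yq_or_Xq_Yq by blast

end

context
  assumes forgotten: forgotten_model
begin

lemma sat_if_model_Y: "model_Y \<Longrightarrow> sat_on bY hY (C \<union> C1 \<union> C4) \<and> sat_on bX hX (C \<union> C1 \<union> C4)"
  using forgotten unfolding forgotten_model_def model_X_Y_def model_Y_def by blast

lemma sat_if_not_model_Y:
  assumes "\<not> model_Y"
  shows "sat_on bY hY (C \<union> C0 \<union> C2) \<and>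
    (sat_on bX hX (C \<union> C2 \<union> C3 \<union> C4) \<or> sat_on bX hX (C \<union> C0 \<union> C2))"
  using forgotten assms unfolding forgotten_model_def model_X_Yq_def model_Xq_Yq_def model_Yq_def
  by blast

lemma C_there_sat: "sat_on bY hY C"
proof (cases model_Y)
  case True
  then show ?thesis
    using sat_if_model_Y unfolding sat_on_Un by blast
next
  case False
  then show ?thesis
    using sat_if_not_model_Y unfolding sat_on_Un by blast
qed

lemma model_Yq_if_sat_on_Diff:
  assumes "r \<in> C0 \<union> C2" and "hY r" and "sat_on bY hY (C0 \<union> C2 - {r})"
  shows model_Yq
proof -
  have "sat_on bY hY C"
    using C_there_sat .
  moreover have "sat_on bY hY (C0 \<union> C2)"
    using sat_on_insert_Diff[OF assms(3)] assms(2) by blast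
  ultimately show model_Yq
    unfolding model_Yq_def sat_on_Un by blast
qed

lemma sat_X_if_violated_C3:
  assumes "r0 \<in> C0 \<union> C2" "hY r0" "sat_on bY hY (C0 \<union> C2 - {r0})" and "r3 \<in> C3" "violated r3"
  shows "sat_on bX hX (C \<union> C2 \<union> C3 \<union> C4) \<or> sat_on bX hX (C \<union> C0 \<union> C2)"
proof -
  have model_Yq
    using assms(1-3) by (rule model_Yq_if_sat_on_Diff)
  moreover have "\<not> model_Y_Yq"
    using assms(4,5) not_model_Y_Yq_if_violated by blast
  ultimately show ?thesis
    using forgotten unfolding forgotten_model_def model_X_Yq_def model_Xq_Yq_def by blast
qed

lemma cond_R_if_forgotten_model: cond_R
  using sat_if_model_Y sat_if_not_model_Y unfolding cond_R_def sat_on_def by blast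

lemma cond_1a_if_forgotten_model: cond_1a
  using sat_if_model_Y sat_if_not_model_Y unfolding cond_1a_def sat_on_def by blast

lemma cond_2a_if_forgotten_model: cond_2a
  using sat_if_not_model_Y not_model_Y_if_violated unfolding cond_2a_def sat_on_def by blast

lemma cond_3a_if_forgotten_model: cond_3a
  unfolding cond_3a_def
proof (intro ballI impI)
  fix r0 r3 assume r: "r0 \<in> C0" "r3 \<in> C3"
    and h: "hY r0 \<and> sat_on bY hY (C0 \<union> C2 - {r0}) \<and> \<not> hY r3 \<and> bX r0 \<and> bX r3"
  have "sat_on bX hX (C \<union> C2 \<union> C3 \<union> C4) \<or> sat_on bX hX (C \<union> C0 \<union> C2)"
    using sat_X_if_violated_C3[of r0 r3] r h body_here_there unfolding violated_def by blast
  then show "hX r0"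
    using r h head_here_there unfolding sat_on_def by blast
qed

lemma cond_1b_if_forgotten_model: cond_1b
  using sat_if_not_model_Y not_model_Y_if_violated unfolding cond_1b_def sat_on_def by blast

lemma cond_2b_if_forgotten_model: cond_2b
  using sat_if_not_model_Y not_model_Y_if_violated unfolding cond_2b_def sat_on_def by blast

lemma cond_3b_if_forgotten_model: cond_3b
  using sat_X_if_violated_C3 unfolding cond_3b_def sat_on_def by blast

lemma cond_4_if_forgotten_model: cond_4
  unfolding cond_4_def
proof (intro ballI)
  fix r' assume "r' \<in> C1 \<union> C4"
  show "(sat_on bY hY (C3 \<union> C4) \<and> bY r' \<longrightarrow> hY r') \<and> (sat_on bY hY (C3 \<union> C4) \<and> bX r' \<longrightarrow> hX r')"
  proof (cases model_Y)
    case True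
    then show ?thesis
      using sat_if_model_Y \<open>r' \<in> C1 \<union> C4\<close> unfolding sat_on_def by blast
  next
    case False
    then have "model_Yq \<and> \<not> model_Y_Yq"
      using forgotten unfolding forgotten_model_def by blast
    then show ?thesis
      unfolding model_Y_Yq_def model_Yq_def sat_on_Un by blast
  qed
qed

lemma cond_5_if_forgotten_model: cond_5
  unfolding cond_5_def
proof (intro ballI)
  fix r' r3 r assume "r' \<in> C1 \<union> C4" "r \<in> C0 \<union> C2"
  show "(violated r \<and> violated r3 \<and> sat_on bY hY C4 \<and> bY r' \<longrightarrow> hY r') \<and>
    (violated r \<and> violated r3 \<and> sat_on bY hY C4 \<and> bX r' \<longrightarrow> hX r')"
  proof (cases "violated r")
    case True
    then have model_Y
      using forgotten not_model_Yq_if_violated \<open>r \<in> C0 \<union> C2\<close> unfolding forgotten_model_def by blast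
    then show ?thesis
      using sat_if_model_Y \<open>r' \<in> C1 \<union> C4\<close> unfolding sat_on_def by blast
  qed simp
qed

lemma cond_6_if_forgotten_model: cond_6
  unfolding cond_6_def
proof (intro ballI impI)
  fix r' r3 assume "r' \<in> C1 \<union> C4"
    and h: "hY r' \<and> violated r3 \<and> sat_on bY hY (C1 \<union> C4 - {r'}) \<and> bX r'"
  have "sat_on bY hY C"
    by (rule C_there_sat)
  moreover have "sat_on bY hY (C1 \<union> C4)"
    by (rule sat_on_insert_Diff) (use h in blast)+
  ultimately have model_Y
    unfolding model_Y_def sat_on_Un by blast
  then show "hX r'"
    using sat_if_model_Y \<open>r' \<in> C1 \<union> C4\<close> h unfolding sat_on_def by blast
qed

lemma cond_7_if_forgotten_model: cond_7
  using sat_X_if_violated_C3 unfolding cond_7_def sat_on_def by blast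

end

lemma forgotten_model_iff_conds:
  "forgotten_model \<longleftrightarrow> cond_R \<and> cond_1a \<and> cond_2a \<and> cond_3a \<and> cond_1b \<and> cond_2b \<and> cond_3b \<and>
    cond_4 \<and> cond_5 \<and> cond_6 \<and> cond_7"
  using forgotten_model_if_conds cond_R_if_forgotten_model cond_1a_if_forgotten_model
    cond_2a_if_forgotten_model cond_3a_if_forgotten_model cond_1b_if_forgotten_model
    cond_2b_if_forgotten_model cond_3b_if_forgotten_model cond_4_if_forgotten_model
    cond_5_if_forgotten_model cond_6_if_forgotten_model cond_7_if_forgotten_model
  by blast

end

section \<open>Rules in normal form, classified by the occurrences of \<open>q\<close>\<close>

definition nf_rule :: "'a rule \<Rightarrow> bool" where
  "nf_rule r \<longleftrightarrow> \<not> tautological r \<and> H r \<inter> Bneg r = {} \<and> Bpos r \<inter> Bnn r = {}"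

lemma nf_rule_NF:
  assumes "r \<in> NF P"
  shows "nf_rule r"
proof -
  have "nf_rule (nf_simp r)" if "\<not> tautological r" for r :: "'a rule"
  proof -
    have "Bpos (nf_simp r) = Bpos r" "Bneg (nf_simp r) = Bneg r" "Bnn (nf_simp r) = Bnn r - Bpos r"
      unfolding Bpos_def Bneg_def Bnn_def B_nf_simp by auto
    then show ?thesis
      using that unfolding nf_rule_def tautological_def H_nf_simp by auto
  qed
  then show ?thesis
    using assms unfolding NF_def Let_def by auto
qed

lemma nf_rule_q_cases:
  assumes "nf_rule r"
  shows "LPos q \<in> B r \<Longrightarrow> q \<notin> H r \<and> LNot q \<notin> B r \<and> LNotNot q \<notin> B r"
    and "LNot q \<in> B r \<Longrightarrow> q \<notin> H r \<and> LNotNot q \<notin> B r"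
  using assms unfolding nf_rule_def tautological_def Bpos_def Bneg_def Bnn_def by auto

definition Rfree :: "'a rule set \<Rightarrow> 'a \<Rightarrow> 'a rule set" where
  "Rfree P q = {r \<in> P. q \<notin> atoms_rule r}"
definition R0 :: "'a rule set \<Rightarrow> 'a \<Rightarrow> 'a rule set" where
  "R0 P q = {r \<in> P. LPos q \<in> B r}"
definition R1 :: "'a rule set \<Rightarrow> 'a \<Rightarrow> 'a rule set" where
  "R1 P q = {r \<in> P. LNot q \<in> B r}"
definition R2 :: "'a rule set \<Rightarrow> 'a \<Rightarrow> 'a rule set" where
  "R2 P q = {r \<in> P. LNotNot q \<in> B r \<and> q \<notin> H r}"
definition R3 :: "'a rule set \<Rightarrow> 'a \<Rightarrow> 'a rule set" where
  "R3 P q = {r \<in> P. LNotNot q \<in> B r \<and> q \<in> H r}"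
definition R4 :: "'a rule set \<Rightarrow> 'a \<Rightarrow> 'a rule set" where
  "R4 P q = {r \<in> P. LNotNot q \<notin> B r \<and> q \<in> H r}"

lemmas R_classes_def = Rfree_def R0_def R1_def R2_def R3_def R4_def

lemma atoms_rule_q_iff: "q \<in> atoms_rule r \<longleftrightarrow> q \<in> H r \<or> LPos q \<in> B r \<or> LNot q \<in> B r \<or> LNotNot q \<in> B r"
  unfolding atoms_rule_def Bpos_def Bneg_def Bnn_def by auto

definition body_there :: "'a \<Rightarrow> 'a set \<Rightarrow> 'a rule \<Rightarrow> bool" where
  "body_there q Y r \<longleftrightarrow> (\<forall>l\<in>Bq q r. lit_there Y l)"

definition body_here :: "'a \<Rightarrow> 'a set \<Rightarrow> 'a set \<Rightarrow> 'a rule \<Rightarrow> bool" where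
  "body_here q X Y r \<longleftrightarrow> (\<forall>l\<in>Bq q r. lit_here X Y l)"

definition head_meets :: "'a \<Rightarrow> 'a set \<Rightarrow> 'a rule \<Rightarrow> bool" where
  "head_meets q Z r \<longleftrightarrow> Hq q r \<inter> Z \<noteq> {}"

lemma atom_of_Bq: "l \<in> Bq q r \<Longrightarrow> atom_of l \<noteq> q"
  unfolding Bq_def by (cases l) auto

lemma body_there_insert [simp]: "body_there q (insert q Y) r = body_there q Y r"
proof -
  have "lit_there (insert q Y) l = lit_there Y l" if "l \<in> Bq q r" for l
    using atom_of_Bq[OF that] by (cases l) auto
  then show ?thesis
    unfolding body_there_def by blast
qed

lemma body_here_insert [simp]:
  "body_here q (insert q X) Y r = body_here q X Y r" "body_here q X (insert q Y) r = body_here q X Y r"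
proof -
  have "lit_here (insert q X) Y l = lit_here X Y l \<and> lit_here X (insert q Y) l = lit_here X Y l"
    if "l \<in> Bq q r" for l
    using atom_of_Bq[OF that] by (cases l) auto
  then show "body_here q (insert q X) Y r = body_here q X Y r" "body_here q X (insert q Y) r = body_here q X Y r"
    unfolding body_here_def by blast+
qed

lemma body_here_same [simp]: "body_here q Y Y r = body_there q Y r"
  unfolding body_here_def body_there_def by (simp add: lit_here_same)

lemma head_meets_insert [simp]: "head_meets q (insert q Z) r = head_meets q Z r"
  unfolding head_meets_def Hq_def by auto

lemma ht_sat_split_q: "ht_sat X Y r \<longleftrightarrow>
  (body_there q Y r \<and> (LPos q \<in> B r \<longrightarrow> q \<in> Y) \<and> (LNot q \<in> B r \<longrightarrow> q \<notin> Y) \<and> (LNotNot q \<in> B r \<longrightarrow> q \<in> Y)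
     \<longrightarrow> head_meets q Y r \<or> q \<in> H r \<and> q \<in> Y) \<and>
  (body_here q X Y r \<and> (LPos q \<in> B r \<longrightarrow> q \<in> X) \<and> (LNot q \<in> B r \<longrightarrow> q \<notin> Y) \<and> (LNotNot q \<in> B r \<longrightarrow> q \<in> Y)
     \<longrightarrow> head_meets q X r \<or> q \<in> H r \<and> q \<in> X)"
proof -
  have ball_B: "(\<forall>l\<in>B r. P l) \<longleftrightarrow> (\<forall>l\<in>Bq q r. P l) \<and>
      (LPos q \<in> B r \<longrightarrow> P (LPos q)) \<and> (LNot q \<in> B r \<longrightarrow> P (LNot q)) \<and> (LNotNot q \<in> B r \<longrightarrow> P (LNotNot q))"
    for P
    unfolding Bq_def by auto
  have "H r \<inter> Z \<noteq> {} \<longleftrightarrow> head_meets q Z r \<or> q \<in> H r \<and> q \<in> Z" for Z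
    unfolding head_meets_def Hq_def by auto
  then show ?thesis
    unfolding ht_sat_def body_there_def body_here_def ball_B[of "lit_there Y"] ball_B[of "lit_here X Y"]
    by simp
qed

definition class_sat :: "'a \<Rightarrow> 'a set \<Rightarrow> 'a set \<Rightarrow> 'a rule \<Rightarrow> bool" where
  "class_sat q X Y r \<longleftrightarrow>
    (q \<notin> atoms_rule r \<longrightarrow> (body_there q Y r \<longrightarrow> head_meets q Y r) \<and> (body_here q X Y r \<longrightarrow> head_meets q X r)) \<and>
    (LPos q \<in> B r \<longrightarrow> (q \<in> Y \<longrightarrow> body_there q Y r \<longrightarrow> head_meets q Y r) \<and>
      (q \<in> X \<longrightarrow> body_here q X Y r \<longrightarrow> head_meets q X r)) \<and>
    (LNot q \<in> B r \<longrightarrow> q \<notin> Y \<longrightarrow> (body_there q Y r \<longrightarrow> head_meets q Y r) \<and> (body_here q X Y r \<longrightarrow> head_meets q X r)) \<and>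
    (LNotNot q \<in> B r \<and> q \<notin> H r \<longrightarrow> q \<in> Y \<longrightarrow>
      (body_there q Y r \<longrightarrow> head_meets q Y r) \<and> (body_here q X Y r \<longrightarrow> head_meets q X r)) \<and>
    (LNotNot q \<in> B r \<and> q \<in> H r \<longrightarrow> q \<in> Y \<and> q \<notin> X \<longrightarrow> body_here q X Y r \<longrightarrow> head_meets q X r) \<and>
    (LNotNot q \<notin> B r \<and> q \<in> H r \<longrightarrow> (q \<notin> Y \<longrightarrow> body_there q Y r \<longrightarrow> head_meets q Y r) \<and>
      (q \<notin> X \<longrightarrow> body_here q X Y r \<longrightarrow> head_meets q X r))"

lemma ht_sat_nf_rule_iff:
  assumes "nf_rule r" and "X \<subseteq> Y"
  shows "ht_sat X Y r \<longleftrightarrow> class_sat q X Y r"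
proof -
  consider (free) "q \<notin> atoms_rule r" | (pos) "LPos q \<in> B r" | (neg) "LNot q \<in> B r"
    | (nn) "LNotNot q \<in> B r" "LPos q \<notin> B r" "LNot q \<notin> B r"
    | (head) "q \<in> H r" "LNotNot q \<notin> B r" "LPos q \<notin> B r" "LNot q \<notin> B r"
    unfolding atoms_rule_q_iff by blast
  then show ?thesis
  proof cases
    case free
    then show ?thesis
      unfolding ht_sat_split_q[of X Y r q] class_sat_def atoms_rule_q_iff by simp
  next
    case pos
    then show ?thesis
      unfolding ht_sat_split_q[of X Y r q] class_sat_def using nf_rule_q_cases(1)[OF assms(1), of q] by (auto simp: atoms_rule_q_iff)
  next
    case neg
    then show ?thesis
      unfolding ht_sat_split_q[of X Y r q] class_sat_def using nf_rule_q_cases[OF assms(1), of q] by (auto simp: atoms_rule_q_iff)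
  next
    case nn
    then show ?thesis
      unfolding ht_sat_split_q[of X Y r q] class_sat_def using assms(2) by (auto simp: atoms_rule_q_iff)
  next
    case head
    then show ?thesis
      unfolding ht_sat_split_q[of X Y r q] class_sat_def using assms(2) by (auto simp: atoms_rule_q_iff)
  qed
qed

lemma ht_model_nf_iff:
  assumes "\<forall>r\<in>P. nf_rule r"
  shows "ht_model X Y P \<longleftrightarrow> X \<subseteq> Y \<and> (\<forall>r\<in>P. class_sat q X Y r)"
proof -
  have "(\<forall>r\<in>P. ht_sat X Y r) \<longleftrightarrow> (\<forall>r\<in>P. class_sat q X Y r)" if "X \<subseteq> Y"
    by (intro ball_cong refl) (simp add: ht_sat_nf_rule_iff assms that)
  then show ?thesis
    unfolding ht_model_iff by blast
qed

lemma sat_on_R_classes: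
  "sat_on b h (Rfree P q) \<longleftrightarrow> (\<forall>r\<in>P. q \<notin> atoms_rule r \<longrightarrow> b r \<longrightarrow> h r)"
  "sat_on b h (R0 P q) \<longleftrightarrow> (\<forall>r\<in>P. LPos q \<in> B r \<longrightarrow> b r \<longrightarrow> h r)"
  "sat_on b h (R1 P q) \<longleftrightarrow> (\<forall>r\<in>P. LNot q \<in> B r \<longrightarrow> b r \<longrightarrow> h r)"
  "sat_on b h (R2 P q) \<longleftrightarrow> (\<forall>r\<in>P. LNotNot q \<in> B r \<and> q \<notin> H r \<longrightarrow> b r \<longrightarrow> h r)"
  "sat_on b h (R3 P q) \<longleftrightarrow> (\<forall>r\<in>P. LNotNot q \<in> B r \<and> q \<in> H r \<longrightarrow> b r \<longrightarrow> h r)"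
  "sat_on b h (R4 P q) \<longleftrightarrow> (\<forall>r\<in>P. LNotNot q \<notin> B r \<and> q \<in> H r \<longrightarrow> b r \<longrightarrow> h r)"
  unfolding sat_on_def R_classes_def by auto

definition forgotten_ht_model :: "'a rule set \<Rightarrow> 'a \<Rightarrow> 'a set \<Rightarrow> 'a set \<Rightarrow> bool" where
  "forgotten_ht_model P q X Y \<longleftrightarrow>
    (ht_model Y Y P \<or> ht_model (insert q Y) (insert q Y) P \<and> \<not> ht_model Y (insert q Y) P) \<and>
    (ht_model Y Y P \<longrightarrow> ht_model X Y P) \<and>
    (ht_model (insert q Y) (insert q Y) P \<and> \<not> ht_model Y (insert q Y) P \<longrightarrow>
       ht_model X (insert q Y) P \<or> ht_model (insert q X) (insert q Y) P)"

lemma forgotten_ht_model_cong: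
  assumes "\<And>X Y. ht_model X Y P \<longleftrightarrow> ht_model X Y P'"
  shows "forgotten_ht_model P q X Y \<longleftrightarrow> forgotten_ht_model P' q X Y"
  unfolding forgotten_ht_model_def assms ..

locale forget_setting =
  fixes P :: "'a rule set" and q :: 'a and X Y :: "'a set"
  assumes nf_rules: "\<forall>r\<in>P. nf_rule r" and q_notin: "q \<notin> Y" and here_there: "X \<subseteq> Y"
begin

lemma q_notin_X: "q \<notin> X"
  using q_notin here_there by blast

sublocale rule_classes "body_there q Y" "body_here q X Y" "head_meets q Y" "head_meets q X"
  "Rfree P q" "R0 P q" "R1 P q" "R2 P q" "R3 P q" "R4 P q"
proof
  show "body_there q Y r" if "body_here q X Y r" for r
    using that lit_here_imp_there[OF here_there] unfolding body_here_def body_there_def by blast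
  show "head_meets q Y r" if "head_meets q X r" for r
    using that here_there unfolding head_meets_def by blast
qed

lemma ht_model_Y_iff: "ht_model Y Y P \<longleftrightarrow> model_Y"
  unfolding ht_model_nf_iff[OF nf_rules, where q=q] model_Y_def sat_on_Un sat_on_R_classes
  by (auto simp: q_notin class_sat_def)

lemma ht_model_Yq_iff: "ht_model (insert q Y) (insert q Y) P \<longleftrightarrow> model_Yq"
  unfolding ht_model_nf_iff[OF nf_rules, where q=q] model_Yq_def sat_on_Un sat_on_R_classes
  by (auto simp: q_notin class_sat_def)

lemma ht_model_Y_Yq_iff: "ht_model Y (insert q Y) P \<longleftrightarrow> model_Y_Yq"
  unfolding ht_model_nf_iff[OF nf_rules, where q=q] model_Y_Yq_def model_Yq_def sat_on_Un sat_on_R_classes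
  by (auto simp: q_notin class_sat_def)

lemma ht_model_X_Y_iff: "ht_model X Y P \<longleftrightarrow> model_X_Y"
  unfolding ht_model_nf_iff[OF nf_rules, where q=q] model_X_Y_def model_Y_def sat_on_Un sat_on_R_classes
  using here_there by (auto simp: q_notin q_notin_X class_sat_def)

lemma ht_model_X_Yq_iff: "ht_model X (insert q Y) P \<longleftrightarrow> model_X_Yq"
  unfolding ht_model_nf_iff[OF nf_rules, where q=q] model_X_Yq_def model_Yq_def sat_on_Un sat_on_R_classes
  using here_there by (auto simp: q_notin q_notin_X class_sat_def)

lemma ht_model_Xq_Yq_iff: "ht_model (insert q X) (insert q Y) P \<longleftrightarrow> model_Xq_Yq"
  unfolding ht_model_nf_iff[OF nf_rules, where q=q] model_Xq_Yq_def model_Yq_def sat_on_Un sat_on_R_classes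
  using here_there by (auto simp: q_notin q_notin_X class_sat_def)

end

section \<open>The HT-models of \<open>f\<^sub>S\<^sub>P\<close>\<close>

definition S1a :: "'a rule set \<Rightarrow> 'a \<Rightarrow> 'a rule set" where
  "S1a P q = {(H r0 \<union> Hq q r4, Bq q r0 \<union> B r4) | r0 r4. r0 \<in> R0 P q \<and> r4 \<in> R4 P q}"
definition S2a :: "'a rule set \<Rightarrow> 'a \<Rightarrow> 'a rule set" where
  "S2a P q = {(H r0 \<union> Hq q r3, Bq q r0 \<union> Bq q r3 \<union> LNot ` Hq q r' \<union> lnn ` Bq q r')
    | r0 r3 r'. r0 \<in> R0 P q \<and> r3 \<in> R3 P q \<and> r' \<in> R1 P q \<union> R4 P q}"
definition S3a :: "'a rule set \<Rightarrow> 'a \<Rightarrow> 'a rule set" where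
  "S3a P q = {(H r0, Bq q r0 \<union> {LNotNot h} \<union> D \<union> Bq q r3 \<union> LNot ` Hq q r3)
    | r0 r3 h D. r0 \<in> R0 P q \<and> r3 \<in> R3 P q \<and> h \<in> H r0 \<and> D \<in> Dq q (R0 P q \<union> R2 P q - {r0})}"
definition S1b :: "'a rule set \<Rightarrow> 'a \<Rightarrow> 'a rule set" where
  "S1b P q = {(H r2, Bq q r2 \<union> LNot ` Hq q r4 \<union> lnn ` B r4) | r2 r4. r2 \<in> R2 P q \<and> r4 \<in> R4 P q}"
definition S2b :: "'a rule set \<Rightarrow> 'a \<Rightarrow> 'a rule set" where
  "S2b P q = {(H r2, Bq q r2 \<union> LNot ` (Hq q r3 \<union> Hq q r') \<union> lnn ` (Bq q r3 \<union> Bq q r'))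
    | r2 r3 r'. r2 \<in> R2 P q \<and> r3 \<in> R3 P q \<and> r' \<in> R1 P q \<union> R4 P q}"
definition S3b :: "'a rule set \<Rightarrow> 'a \<Rightarrow> 'a rule set" where
  "S3b P q = {(H r2, Bq q r2 \<union> LNot ` Hq q r3 \<union> lnn ` (Bq q r3 \<union> {LPos h}) \<union> D)
    | r2 r3 h D. r2 \<in> R2 P q \<and> r3 \<in> R3 P q \<and> h \<in> H r2 \<and> D \<in> Dq q (R0 P q \<union> R2 P q - {r2})}"
definition S4 :: "'a rule set \<Rightarrow> 'a \<Rightarrow> 'a rule set" where
  "S4 P q = {(Hq q r', Bq q r' \<union> D)
    | r' D. r' \<in> R1 P q \<union> R4 P q \<and> D \<in> Dq q (R3 P q \<union> R4 P q) \<and> D \<inter> lnot ` Bq q r' = {}}"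
definition S5 :: "'a rule set \<Rightarrow> 'a \<Rightarrow> 'a rule set" where
  "S5 P q = {(Hq q r', Bq q r' \<union> LNot ` (H r \<union> Hq q r3) \<union> lnn ` (Bq q r \<union> Bq q r3) \<union> D)
    | r' r3 r D. r' \<in> R1 P q \<union> R4 P q \<and> r3 \<in> R3 P q \<and> r \<in> R0 P q \<union> R2 P q \<and> D \<in> Dq q (R4 P q)
       \<and> D \<inter> lnot ` Bq q r' = {}}"
definition S6 :: "'a rule set \<Rightarrow> 'a \<Rightarrow> 'a rule set" where
  "S6 P q = {(Hq q r', Bq q r' \<union> LNot ` Hq q r3 \<union> lnn ` (Bq q r3 \<union> {LPos h}) \<union> D)
    | r' r3 h D. r' \<in> R1 P q \<union> R4 P q \<and> r3 \<in> R3 P q \<and> h \<in> Hq q r'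
       \<and> D \<in> Dq q (R1 P q \<union> R4 P q - {r'})}"
definition S7 :: "'a rule set \<Rightarrow> 'a \<Rightarrow> 'a rule set" where
  "S7 P q = {(H r0 \<union> Hq q r3, Bq q r0 \<union> Bq q r3 \<union> LNot ` Hq q r3' \<union> lnn ` (Bq q r3' \<union> {LPos h}) \<union> D)
    | r0 r3 r3' D h. r0 \<in> R0 P q \<and> r3 \<in> R3 P q \<and> r3' \<in> R3 P q \<and> r3 \<noteq> r3'
       \<and> D \<in> Dq q (R0 P q \<union> R2 P q - {r0}) \<and> h \<in> H r0}"

definition fSP_rules :: "'a rule set \<Rightarrow> 'a \<Rightarrow> 'a rule set" where
  "fSP_rules P q = Rfree P q \<union> S1a P q \<union> S2a P q \<union> S3a P q \<union> S1b P q \<union> S2b P q \<union> S3b P q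
    \<union> S4 P q \<union> S5 P q \<union> S6 P q \<union> S7 P q"

lemma fSP_unfold: "fSP P q = NF (fSP_rules (NF P) q)"
  unfolding fSP_def fSP_rules_def Let_def R_classes_def
    S1a_def S2a_def S3a_def S1b_def S2b_def S3b_def S4_def S5_def S6_def S7_def
  by (rule refl)

lemma lit_there_lnot [simp]: "lit_there Y (lnot l) \<longleftrightarrow> \<not> lit_there Y l"
  by (cases l) auto

lemma lit_here_lnot [simp]: "lit_here X Y (lnot l) \<longleftrightarrow> \<not> lit_there Y l"
  by (cases l) auto

lemma lit_there_lnn [simp]: "lit_there Y (lnn l) \<longleftrightarrow> lit_there Y l"
  by (cases l) auto

lemma lit_here_lnn [simp]: "lit_here X Y (lnn l) \<longleftrightarrow> lit_there Y l"
  by (cases l) auto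

lemma mem_Dq_iff: "D \<in> Dq q Q \<longleftrightarrow> (\<exists>Q1 Q2 l1 l2. D = lnot ` l1 ` Q1 \<union> LNotNot ` l2 ` Q2 \<and>
    Q1 \<union> Q2 = Q \<and> Q1 \<inter> Q2 = {} \<and> (\<forall>r\<in>Q1. l1 r \<in> Bq q r) \<and> (\<forall>r\<in>Q2. l2 r \<in> Hq q r))"
  unfolding Dq_def by (rule mem_Collect_eq)

lemma Dq_lit_here_iff:
  assumes "D \<in> Dq q Q"
  shows "(\<forall>l\<in>D. lit_here X Y l) \<longleftrightarrow> (\<forall>l\<in>D. lit_there Y l)"
proof -
  obtain Q1 Q2 :: "'a rule set" and l1 l2 where "D = lnot ` l1 ` Q1 \<union> LNotNot ` l2 ` Q2"
    using assms unfolding mem_Dq_iff by blast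
  then show ?thesis
    by (simp add: ball_Un)
qed

lemma Dq_witness_iff:
  "(\<exists>D\<in>Dq q Q. \<forall>l\<in>D. lit_there Y l) \<longleftrightarrow> sat_on (body_there q Y) (head_meets q Y) Q"
proof
  assume "\<exists>D\<in>Dq q Q. \<forall>l\<in>D. lit_there Y l"
  then obtain D where "D \<in> Dq q Q" and D_true: "\<forall>l\<in>D. lit_there Y l"
    by blast
  then obtain Q1 Q2 :: "'a rule set" and l1 l2 where D: "D = lnot ` l1 ` Q1 \<union> LNotNot ` l2 ` Q2"
    and "Q1 \<union> Q2 = Q" "\<forall>r\<in>Q1. l1 r \<in> Bq q r" "\<forall>r\<in>Q2. l2 r \<in> Hq q r"
    unfolding mem_Dq_iff by blast
  moreover have "\<forall>r\<in>Q1. \<not> lit_there Y (l1 r)" "\<forall>r\<in>Q2. l2 r \<in> Y"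
    using D_true unfolding D by (simp_all add: ball_Un)
  ultimately show "sat_on (body_there q Y) (head_meets q Y) Q"
    unfolding sat_on_def body_there_def head_meets_def by blast
next
  assume sat: "sat_on (body_there q Y) (head_meets q Y) Q"
  define Q1 where "Q1 = {r \<in> Q. \<not> body_there q Y r}"
  have "\<forall>r\<in>Q1. \<exists>l. l \<in> Bq q r \<and> \<not> lit_there Y l"
    unfolding Q1_def body_there_def by blast
  from bchoice[OF this] obtain l1 where l1: "\<forall>r\<in>Q1. l1 r \<in> Bq q r \<and> \<not> lit_there Y (l1 r)"
    by blast
  have "\<forall>r\<in>Q - Q1. \<exists>h. h \<in> Hq q r \<and> h \<in> Y"
    using sat unfolding Q1_def sat_on_def head_meets_def by blast
  from bchoice[OF this] obtain l2 where l2: "\<forall>r\<in>Q - Q1. l2 r \<in> Hq q r \<and> l2 r \<in> Y"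
    by blast
  have "lnot ` l1 ` Q1 \<union> LNotNot ` l2 ` (Q - Q1) \<in> Dq q Q"
    unfolding mem_Dq_iff
    by (intro exI[of _ Q1] exI[of _ "Q - Q1"] exI[of _ l1] exI[of _ l2]) (use l1 l2 in \<open>auto simp: Q1_def\<close>)
  moreover have "\<forall>l\<in>lnot ` l1 ` Q1 \<union> LNotNot ` l2 ` (Q - Q1). lit_there Y l"
    using l1 l2 by auto
  ultimately show "\<exists>D\<in>Dq q Q. \<forall>l\<in>D. lit_there Y l"
    by blast
qed

lemma ht_sat_pair: "ht_sat X Y (Hd, Bd) \<longleftrightarrow>
    ((\<forall>l\<in>Bd. lit_there Y l) \<longrightarrow> Hd \<inter> Y \<noteq> {}) \<and> ((\<forall>l\<in>Bd. lit_here X Y l) \<longrightarrow> Hd \<inter> X \<noteq> {})"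
  unfolding ht_sat_def H_def B_def by simp

lemma ball_Bq_lit_there [simp]: "(\<forall>l\<in>Bq q r. lit_there Y l) \<longleftrightarrow> body_there q Y r"
  unfolding body_there_def ..

lemma ball_Bq_lit_here [simp]: "(\<forall>l\<in>Bq q r. lit_here X Y l) \<longleftrightarrow> body_here q X Y r"
  unfolding body_here_def ..

lemma Hq_Int_empty_iff [simp]: "Hq q r \<inter> Z = {} \<longleftrightarrow> \<not> head_meets q Z r"
  unfolding head_meets_def by simp

lemma Hq_disjoint_iff [simp]: "(\<forall>h\<in>Hq q r. h \<notin> Z) \<longleftrightarrow> \<not> head_meets q Z r"
  unfolding head_meets_def by blast

lemma Dq_disjoint_if_true:
  assumes "\<forall>l\<in>D. lit_there Y l" and "body_there q Y r"
  shows "D \<inter> lnot ` Bq q r = {}"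
proof -
  have "lnot l \<notin> D" if "l \<in> Bq q r" for l
    using assms that unfolding body_there_def by (metis lit_there_lnot)
  then show ?thesis
    by blast
qed

lemma ball_Dq_imp_iff:
  "(\<forall>D\<in>Dq q Q. (\<forall>l\<in>D. lit_there Y l) \<longrightarrow> \<Phi>) \<longleftrightarrow> (sat_on (body_there q Y) (head_meets q Y) Q \<longrightarrow> \<Phi>)"
  unfolding Dq_witness_iff[symmetric] by blast

lemma ball_witnessed_family:
  assumes "\<And>h D. h \<in> A \<Longrightarrow> D \<in> Dq q Q \<Longrightarrow> ht_sat X Y (f h D) \<longleftrightarrow> (h \<in> Y \<and> (\<forall>l\<in>D. lit_there Y l) \<longrightarrow> \<Phi>)"
  shows "(\<forall>h\<in>A. \<forall>D\<in>Dq q Q. ht_sat X Y (f h D)) \<longleftrightarrow>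
    (A \<inter> Y \<noteq> {} \<and> sat_on (body_there q Y) (head_meets q Y) Q \<longrightarrow> \<Phi>)"
proof -
  have "(\<forall>h\<in>A. \<forall>D\<in>Dq q Q. ht_sat X Y (f h D)) \<longleftrightarrow>
      (\<forall>h\<in>A. h \<in> Y \<longrightarrow> (\<forall>D\<in>Dq q Q. (\<forall>l\<in>D. lit_there Y l) \<longrightarrow> \<Phi>))"
    using assms by (simp add: imp_conjL)
  also have "\<dots> \<longleftrightarrow> (A \<inter> Y \<noteq> {} \<longrightarrow> (\<forall>D\<in>Dq q Q. (\<forall>l\<in>D. lit_there Y l) \<longrightarrow> \<Phi>))"
    by blast
  finally show ?thesis
    unfolding ball_Dq_imp_iff by blast
qed

lemma B_eq_Bq_if_R4: "r \<in> R4 P q \<Longrightarrow> nf_rule r \<Longrightarrow> B r = Bq q r"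
  using nf_rule_q_cases[of r q] unfolding R4_def Bq_def by auto

context forget_setting
begin

abbreviation "bY \<equiv> body_there q Y"
abbreviation "bX \<equiv> body_here q X Y"
abbreviation "hY \<equiv> head_meets q Y"
abbreviation "hX \<equiv> head_meets q X"

lemma H_Int_Y_iff [simp]: "H r \<inter> Y = {} \<longleftrightarrow> \<not> hY r"
  using q_notin unfolding head_meets_def Hq_def by blast

lemma H_disjoint_Y_iff [simp]: "(\<forall>h\<in>H r. h \<notin> Y) \<longleftrightarrow> \<not> hY r"
  using q_notin unfolding head_meets_def Hq_def by blast

lemma H_Int_X_iff [simp]: "H r \<inter> X = {} \<longleftrightarrow> \<not> hX r"
  using q_notin_X unfolding head_meets_def Hq_def by blast

lemma B_R4:
  assumes "r \<in> R4 P q"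
  shows "B r = Bq q r"
proof (rule B_eq_Bq_if_R4[OF assms])
  show "nf_rule r"
    using assms nf_rules unfolding R4_def by blast
qed

lemma ht_sat_Rfree_iff:
  assumes "r \<in> Rfree P q"
  shows "ht_sat X Y r \<longleftrightarrow> (bY r \<longrightarrow> hY r) \<and> (bX r \<longrightarrow> hX r)"
proof -
  have "r \<in> P" "q \<notin> atoms_rule r"
    using assms unfolding Rfree_def by auto
  then show ?thesis
    using ht_sat_nf_rule_iff[OF bspec[OF nf_rules] here_there, of r q]
    unfolding class_sat_def atoms_rule_q_iff by simp
qed

lemma ht_sat_1a_iff: "r4 \<in> R4 P q \<Longrightarrow> ht_sat X Y (H r0 \<union> Hq q r4, Bq q r0 \<union> B r4) \<longleftrightarrow>
    (bY r0 \<and> bY r4 \<longrightarrow> hY r0 \<or> hY r4) \<and> (bX r0 \<and> bX r4 \<longrightarrow> hX r0 \<or> hX r4)"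
  using B_R4[of r4] by (simp add: ball_Un ht_sat_pair Int_Un_distrib2)

lemma ht_sat_2a_iff: "ht_sat X Y (H r0 \<union> Hq q r3, Bq q r0 \<union> Bq q r3 \<union> LNot ` Hq q r' \<union> lnn ` Bq q r') \<longleftrightarrow>
    (bY r0 \<and> bY r3 \<and> violated r' \<longrightarrow> hY r0 \<or> hY r3) \<and> (bX r0 \<and> bX r3 \<and> violated r' \<longrightarrow> hX r0 \<or> hX r3)"
  unfolding violated_def by (simp add: ball_Un ht_sat_pair Int_Un_distrib2; blast)

lemma ht_sat_3a_iff: "D \<in> Dq q Q \<Longrightarrow>
  ht_sat X Y (H r0, Bq q r0 \<union> {LNotNot h} \<union> D \<union> Bq q r3 \<union> LNot ` Hq q r3) \<longleftrightarrow>
    (h \<in> Y \<and> (\<forall>l\<in>D. lit_there Y l) \<longrightarrow>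
      (bY r0 \<and> bY r3 \<and> \<not> hY r3 \<longrightarrow> hY r0) \<and> (bX r0 \<and> bX r3 \<and> \<not> hY r3 \<longrightarrow> hX r0))"
  by (simp add: ball_Un ht_sat_pair Dq_lit_here_iff; blast)

lemma ht_sat_1b_iff: "r4 \<in> R4 P q \<Longrightarrow> ht_sat X Y (H r2, Bq q r2 \<union> LNot ` Hq q r4 \<union> lnn ` B r4) \<longleftrightarrow>
    (bY r2 \<and> violated r4 \<longrightarrow> hY r2) \<and> (bX r2 \<and> violated r4 \<longrightarrow> hX r2)"
  using B_R4[of r4] unfolding violated_def by (simp add: ball_Un ht_sat_pair; blast)

lemma ht_sat_2b_iff:
  "ht_sat X Y (H r2, Bq q r2 \<union> LNot ` (Hq q r3 \<union> Hq q r') \<union> lnn ` (Bq q r3 \<union> Bq q r')) \<longleftrightarrow>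
    (bY r2 \<and> violated r3 \<and> violated r' \<longrightarrow> hY r2) \<and> (bX r2 \<and> violated r3 \<and> violated r' \<longrightarrow> hX r2)"
  unfolding violated_def by (simp add: ball_Un ht_sat_pair; blast)

lemma ht_sat_3b_iff: "D \<in> Dq q Q \<Longrightarrow>
  ht_sat X Y (H r2, Bq q r2 \<union> LNot ` Hq q r3 \<union> lnn ` (Bq q r3 \<union> {LPos h}) \<union> D) \<longleftrightarrow>
    (h \<in> Y \<and> (\<forall>l\<in>D. lit_there Y l) \<longrightarrow>
      (bY r2 \<and> violated r3 \<longrightarrow> hY r2) \<and> (bX r2 \<and> violated r3 \<longrightarrow> hX r2))"
  unfolding violated_def by (simp add: ball_Un ht_sat_pair Dq_lit_here_iff; blast)

lemma ht_sat_4_iff: "D \<in> Dq q Q \<Longrightarrow> ht_sat X Y (Hq q r', Bq q r' \<union> D) \<longleftrightarrow>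
    ((\<forall>l\<in>D. lit_there Y l) \<longrightarrow> (bY r' \<longrightarrow> hY r') \<and> (bX r' \<longrightarrow> hX r'))"
  by (simp add: ball_Un ht_sat_pair Dq_lit_here_iff; blast)

lemma ht_sat_5_iff: "D \<in> Dq q Q \<Longrightarrow>
  ht_sat X Y (Hq q r', Bq q r' \<union> LNot ` (H r \<union> Hq q r3) \<union> lnn ` (Bq q r \<union> Bq q r3) \<union> D) \<longleftrightarrow>
    ((\<forall>l\<in>D. lit_there Y l) \<longrightarrow>
      (bY r' \<longrightarrow> violated r \<and> violated r3 \<longrightarrow> hY r') \<and> (bX r' \<longrightarrow> violated r \<and> violated r3 \<longrightarrow> hX r'))"
  unfolding violated_def by (simp add: ball_Un ht_sat_pair Dq_lit_here_iff; blast)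

lemma ht_sat_6_iff: "D \<in> Dq q Q \<Longrightarrow>
  ht_sat X Y (Hq q r', Bq q r' \<union> LNot ` Hq q r3 \<union> lnn ` (Bq q r3 \<union> {LPos h}) \<union> D) \<longleftrightarrow>
    (h \<in> Y \<and> (\<forall>l\<in>D. lit_there Y l) \<longrightarrow>
      (bY r' \<and> violated r3 \<longrightarrow> hY r') \<and> (bX r' \<and> violated r3 \<longrightarrow> hX r'))"
  unfolding violated_def by (simp add: ball_Un ht_sat_pair Dq_lit_here_iff; blast)

lemma ht_sat_7_iff: "D \<in> Dq q Q \<Longrightarrow>
  ht_sat X Y (H r0 \<union> Hq q r3, Bq q r0 \<union> Bq q r3 \<union> LNot ` Hq q r3' \<union> lnn ` (Bq q r3' \<union> {LPos h}) \<union> D) \<longleftrightarrow>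
    (h \<in> Y \<and> (\<forall>l\<in>D. lit_there Y l) \<longrightarrow>
      (bY r0 \<and> bY r3 \<and> violated r3' \<longrightarrow> hY r0 \<or> hY r3) \<and> (bX r0 \<and> bX r3 \<and> violated r3' \<longrightarrow> hX r0 \<or> hX r3))"
  unfolding violated_def by (simp add: ball_Un ht_sat_pair Dq_lit_here_iff Int_Un_distrib2; blast)

lemma sat_Rfree_iff: "(\<forall>\<rho>\<in>Rfree P q. ht_sat X Y \<rho>) \<longleftrightarrow> cond_R"
  unfolding cond_R_def by (simp add: ht_sat_Rfree_iff)

lemma sat_S1a_iff: "(\<forall>\<rho>\<in>S1a P q. ht_sat X Y \<rho>) \<longleftrightarrow> cond_1a"
proof -
  have "(\<forall>\<rho>\<in>S1a P q. ht_sat X Y \<rho>) \<longleftrightarrow>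
      (\<forall>r0\<in>R0 P q. \<forall>r4\<in>R4 P q. ht_sat X Y (H r0 \<union> Hq q r4, Bq q r0 \<union> B r4))"
    unfolding S1a_def by blast
  then show ?thesis
    unfolding cond_1a_def by (simp add: ht_sat_1a_iff)
qed

lemma sat_S2a_iff: "(\<forall>\<rho>\<in>S2a P q. ht_sat X Y \<rho>) \<longleftrightarrow> cond_2a"
proof -
  have "(\<forall>\<rho>\<in>S2a P q. ht_sat X Y \<rho>) \<longleftrightarrow> (\<forall>r0\<in>R0 P q. \<forall>r3\<in>R3 P q. \<forall>r'\<in>R1 P q \<union> R4 P q.
      ht_sat X Y (H r0 \<union> Hq q r3, Bq q r0 \<union> Bq q r3 \<union> LNot ` Hq q r' \<union> lnn ` Bq q r'))"
    unfolding S2a_def by blast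
  then show ?thesis
    unfolding cond_2a_def ht_sat_2a_iff .
qed

lemma sat_S3a_iff: "(\<forall>\<rho>\<in>S3a P q. ht_sat X Y \<rho>) \<longleftrightarrow> cond_3a"
proof -
  have "(\<forall>\<rho>\<in>S3a P q. ht_sat X Y \<rho>) \<longleftrightarrow>
      (\<forall>r0\<in>R0 P q. \<forall>r3\<in>R3 P q. \<forall>h\<in>H r0. \<forall>D\<in>Dq q (R0 P q \<union> R2 P q - {r0}).
        ht_sat X Y (H r0, Bq q r0 \<union> {LNotNot h} \<union> D \<union> Bq q r3 \<union> LNot ` Hq q r3))"
    unfolding S3a_def by blast
  also have "\<dots> \<longleftrightarrow> (\<forall>r0\<in>R0 P q. \<forall>r3\<in>R3 P q.
      H r0 \<inter> Y \<noteq> {} \<and> sat_on bY hY (R0 P q \<union> R2 P q - {r0}) \<longrightarrow>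
        (bY r0 \<and> bY r3 \<and> \<not> hY r3 \<longrightarrow> hY r0) \<and> (bX r0 \<and> bX r3 \<and> \<not> hY r3 \<longrightarrow> hX r0))"
    by (intro ball_cong refl ball_witnessed_family ht_sat_3a_iff)
  finally show ?thesis
    unfolding cond_3a_def by auto
qed

lemma sat_S1b_iff: "(\<forall>\<rho>\<in>S1b P q. ht_sat X Y \<rho>) \<longleftrightarrow> cond_1b"
proof -
  have "(\<forall>\<rho>\<in>S1b P q. ht_sat X Y \<rho>) \<longleftrightarrow>
      (\<forall>r2\<in>R2 P q. \<forall>r4\<in>R4 P q. ht_sat X Y (H r2, Bq q r2 \<union> LNot ` Hq q r4 \<union> lnn ` B r4))"
    unfolding S1b_def by blast
  then show ?thesis
    unfolding cond_1b_def by (simp add: ht_sat_1b_iff)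
qed

lemma sat_S2b_iff: "(\<forall>\<rho>\<in>S2b P q. ht_sat X Y \<rho>) \<longleftrightarrow> cond_2b"
proof -
  have "(\<forall>\<rho>\<in>S2b P q. ht_sat X Y \<rho>) \<longleftrightarrow> (\<forall>r2\<in>R2 P q. \<forall>r3\<in>R3 P q. \<forall>r'\<in>R1 P q \<union> R4 P q.
      ht_sat X Y (H r2, Bq q r2 \<union> LNot ` (Hq q r3 \<union> Hq q r') \<union> lnn ` (Bq q r3 \<union> Bq q r')))"
    unfolding S2b_def by blast
  then show ?thesis
    unfolding cond_2b_def ht_sat_2b_iff .
qed

lemma sat_S3b_iff: "(\<forall>\<rho>\<in>S3b P q. ht_sat X Y \<rho>) \<longleftrightarrow> cond_3b"
proof -
  have "(\<forall>\<rho>\<in>S3b P q. ht_sat X Y \<rho>) \<longleftrightarrow>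
      (\<forall>r2\<in>R2 P q. \<forall>r3\<in>R3 P q. \<forall>h\<in>H r2. \<forall>D\<in>Dq q (R0 P q \<union> R2 P q - {r2}).
        ht_sat X Y (H r2, Bq q r2 \<union> LNot ` Hq q r3 \<union> lnn ` (Bq q r3 \<union> {LPos h}) \<union> D))"
    unfolding S3b_def by blast
  also have "\<dots> \<longleftrightarrow> (\<forall>r2\<in>R2 P q. \<forall>r3\<in>R3 P q.
      H r2 \<inter> Y \<noteq> {} \<and> sat_on bY hY (R0 P q \<union> R2 P q - {r2}) \<longrightarrow>
        (bY r2 \<and> violated r3 \<longrightarrow> hY r2) \<and> (bX r2 \<and> violated r3 \<longrightarrow> hX r2))"
    by (intro ball_cong refl ball_witnessed_family ht_sat_3b_iff)
  finally show ?thesis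
    unfolding cond_3b_def by auto
qed

lemma disjointness_guard_iff:
  "(D \<inter> lnot ` Bq q r = {} \<longrightarrow> (\<forall>l\<in>D. lit_there Y l) \<longrightarrow> (bY r \<longrightarrow> \<Psi>Y) \<and> (bX r \<longrightarrow> \<Psi>X)) \<longleftrightarrow>
    ((\<forall>l\<in>D. lit_there Y l) \<longrightarrow> (bY r \<longrightarrow> \<Psi>Y) \<and> (bX r \<longrightarrow> \<Psi>X))"
proof -
  have "D \<inter> lnot ` Bq q r = {}" if "\<forall>l\<in>D. lit_there Y l" and "bY r"
    using that by (rule Dq_disjoint_if_true)
  then show ?thesis
    using body_here_there[of r] by blast
qed

lemma sat_S4_iff: "(\<forall>\<rho>\<in>S4 P q. ht_sat X Y \<rho>) \<longleftrightarrow> cond_4"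
proof -
  have "(\<forall>\<rho>\<in>S4 P q. ht_sat X Y \<rho>) \<longleftrightarrow> (\<forall>r'\<in>R1 P q \<union> R4 P q. \<forall>D\<in>Dq q (R3 P q \<union> R4 P q).
      D \<inter> lnot ` Bq q r' = {} \<longrightarrow> ht_sat X Y (Hq q r', Bq q r' \<union> D))"
    unfolding S4_def by blast
  also have "\<dots> \<longleftrightarrow> (\<forall>r'\<in>R1 P q \<union> R4 P q. \<forall>D\<in>Dq q (R3 P q \<union> R4 P q).
      (\<forall>l\<in>D. lit_there Y l) \<longrightarrow> (bY r' \<longrightarrow> hY r') \<and> (bX r' \<longrightarrow> hX r'))"
    by (intro ball_cong refl) (simp only: ht_sat_4_iff disjointness_guard_iff)
  finally show ?thesis
    unfolding cond_4_def ball_Dq_imp_iff by auto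
qed

lemma sat_S5_iff: "(\<forall>\<rho>\<in>S5 P q. ht_sat X Y \<rho>) \<longleftrightarrow> cond_5"
proof -
  have "(\<forall>\<rho>\<in>S5 P q. ht_sat X Y \<rho>) \<longleftrightarrow>
      (\<forall>r'\<in>R1 P q \<union> R4 P q. \<forall>r3\<in>R3 P q. \<forall>r\<in>R0 P q \<union> R2 P q. \<forall>D\<in>Dq q (R4 P q).
        D \<inter> lnot ` Bq q r' = {} \<longrightarrow>
        ht_sat X Y (Hq q r', Bq q r' \<union> LNot ` (H r \<union> Hq q r3) \<union> lnn ` (Bq q r \<union> Bq q r3) \<union> D))"
    unfolding S5_def by blast
  also have "\<dots> \<longleftrightarrow>
      (\<forall>r'\<in>R1 P q \<union> R4 P q. \<forall>r3\<in>R3 P q. \<forall>r\<in>R0 P q \<union> R2 P q. \<forall>D\<in>Dq q (R4 P q).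
        (\<forall>l\<in>D. lit_there Y l) \<longrightarrow>
        (bY r' \<longrightarrow> violated r \<and> violated r3 \<longrightarrow> hY r') \<and> (bX r' \<longrightarrow> violated r \<and> violated r3 \<longrightarrow> hX r'))"
    by (intro ball_cong refl) (simp only: ht_sat_5_iff disjointness_guard_iff)
  finally show ?thesis
    unfolding cond_5_def ball_Dq_imp_iff by auto
qed

lemma sat_S6_iff: "(\<forall>\<rho>\<in>S6 P q. ht_sat X Y \<rho>) \<longleftrightarrow> cond_6"
proof -
  have "(\<forall>\<rho>\<in>S6 P q. ht_sat X Y \<rho>) \<longleftrightarrow>
      (\<forall>r'\<in>R1 P q \<union> R4 P q. \<forall>r3\<in>R3 P q. \<forall>h\<in>Hq q r'. \<forall>D\<in>Dq q (R1 P q \<union> R4 P q - {r'}).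
        ht_sat X Y (Hq q r', Bq q r' \<union> LNot ` Hq q r3 \<union> lnn ` (Bq q r3 \<union> {LPos h}) \<union> D))"
    unfolding S6_def by blast
  also have "\<dots> \<longleftrightarrow> (\<forall>r'\<in>R1 P q \<union> R4 P q. \<forall>r3\<in>R3 P q.
      Hq q r' \<inter> Y \<noteq> {} \<and> sat_on bY hY (R1 P q \<union> R4 P q - {r'}) \<longrightarrow>
        (bY r' \<and> violated r3 \<longrightarrow> hY r') \<and> (bX r' \<and> violated r3 \<longrightarrow> hX r'))"
    by (intro ball_cong refl ball_witnessed_family ht_sat_6_iff)
  finally show ?thesis
    unfolding cond_6_def by auto
qed

lemma sat_S7_iff: "(\<forall>\<rho>\<in>S7 P q. ht_sat X Y \<rho>) \<longleftrightarrow> cond_7"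
proof -
  have "(\<forall>\<rho>\<in>S7 P q. ht_sat X Y \<rho>) \<longleftrightarrow>
      (\<forall>r0\<in>R0 P q. \<forall>r3\<in>R3 P q. \<forall>r3'\<in>R3 P q. r3 \<noteq> r3' \<longrightarrow>
        (\<forall>h\<in>H r0. \<forall>D\<in>Dq q (R0 P q \<union> R2 P q - {r0}).
          ht_sat X Y (H r0 \<union> Hq q r3,
            Bq q r0 \<union> Bq q r3 \<union> LNot ` Hq q r3' \<union> lnn ` (Bq q r3' \<union> {LPos h}) \<union> D)))"
    unfolding S7_def by blast
  also have "\<dots> \<longleftrightarrow> (\<forall>r0\<in>R0 P q. \<forall>r3\<in>R3 P q. \<forall>r3'\<in>R3 P q. r3 \<noteq> r3' \<longrightarrow>
      (H r0 \<inter> Y \<noteq> {} \<and> sat_on bY hY (R0 P q \<union> R2 P q - {r0}) \<longrightarrow>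
        (bY r0 \<and> bY r3 \<and> violated r3' \<longrightarrow> hY r0 \<or> hY r3) \<and>
        (bX r0 \<and> bX r3 \<and> violated r3' \<longrightarrow> hX r0 \<or> hX r3)))"
    by (intro ball_cong refl imp_cong ball_witnessed_family ht_sat_7_iff)
  finally show ?thesis
    unfolding cond_7_def by (simp only: H_Int_Y_iff not_not) blast
qed

lemma ht_model_fSP_rules_iff: "ht_model X Y (fSP_rules P q) \<longleftrightarrow> forgotten_ht_model P q X Y"
proof -
  have "ht_model X Y (fSP_rules P q) \<longleftrightarrow> cond_R \<and> cond_1a \<and> cond_2a \<and> cond_3a \<and> cond_1b \<and>
      cond_2b \<and> cond_3b \<and> cond_4 \<and> cond_5 \<and> cond_6 \<and> cond_7"
    unfolding ht_model_iff fSP_rules_def ball_Un sat_Rfree_iff sat_S1a_iff sat_S2a_iff sat_S3a_iff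
      sat_S1b_iff sat_S2b_iff sat_S3b_iff sat_S4_iff sat_S5_iff sat_S6_iff sat_S7_iff
    using here_there by simp
  also have "\<dots> \<longleftrightarrow> forgotten_model"
    using forgotten_model_iff_conds by blast
  also have "\<dots> \<longleftrightarrow> forgotten_ht_model P q X Y"
    unfolding forgotten_model_def forgotten_ht_model_def ht_model_Y_iff ht_model_Yq_iff ht_model_Y_Yq_iff
      ht_model_X_Y_iff ht_model_X_Yq_iff ht_model_Xq_Yq_iff ..
  finally show ?thesis .
qed

end

section \<open>The rules of \<open>f\<^sub>S\<^sub>P\<close> avoid \<open>q\<close> and are finitely many\<close>

lemma atom_of_lnot [simp]: "atom_of (lnot l) = atom_of l"
  by (cases l) auto

lemma atom_of_lnn [simp]: "atom_of (lnn l) = atom_of l"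
  by (cases l) auto

lemma atoms_rule_pair_subset_iff: "atoms_rule (Hd, Bd) \<subseteq> A \<longleftrightarrow> Hd \<subseteq> A \<and> atom_of ` Bd \<subseteq> A"
  unfolding atoms_rule_eq H_def B_def by simp

context
  fixes P :: "'a rule set" and q :: 'a
  assumes nf_rules: "\<forall>r\<in>P. nf_rule r"
begin

lemma Hq_subset: "r \<in> P \<Longrightarrow> Hq q r \<subseteq> atoms_prog P - {q}"
  unfolding Hq_def atoms_prog_def atoms_rule_def by blast

lemma atoms_Bq_subset:
  assumes "r \<in> P"
  shows "atom_of ` Bq q r \<subseteq> atoms_prog P - {q}"
proof
  fix a assume "a \<in> atom_of ` Bq q r"
  then obtain l where "l \<in> Bq q r" and a: "a = atom_of l"
    by blast
  then have "a \<noteq> q"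
    using atom_of_Bq by simp
  moreover have "a \<in> atoms_rule r"
    using \<open>l \<in> Bq q r\<close> a unfolding atoms_rule_eq Bq_def by blast
  ultimately show "a \<in> atoms_prog P - {q}"
    using assms unfolding atoms_prog_def by blast
qed

lemma H_subset:
  assumes "r \<in> R0 P q \<union> R2 P q"
  shows "H r \<subseteq> atoms_prog P - {q}"
proof -
  have "r \<in> P" "q \<notin> H r"
    using assms nf_rules nf_rule_q_cases(1)[of r q] unfolding R0_def R2_def by auto
  then show ?thesis
    unfolding atoms_prog_def atoms_rule_def by blast
qed

lemma atoms_B_R4_subset:
  assumes "r \<in> R4 P q"
  shows "atom_of ` B r \<subseteq> atoms_prog P - {q}"
proof -
  have "r \<in> P"
    using assms unfolding R4_def by blast
  then have "nf_rule r"
    using nf_rules by blast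
  then have "B r = Bq q r"
    by (rule B_eq_Bq_if_R4[OF assms])
  then show ?thesis
    using atoms_Bq_subset[OF \<open>r \<in> P\<close>] by (simp only:)
qed

lemma atoms_Dq_subset:
  assumes "Q \<subseteq> P" and "D \<in> Dq q Q"
  shows "atom_of ` D \<subseteq> atoms_prog P - {q}"
proof -
  obtain Q1 Q2 :: "'a rule set" and l1 l2 where D: "D = lnot ` l1 ` Q1 \<union> LNotNot ` l2 ` Q2"
    and "Q1 \<union> Q2 = Q" "\<forall>r\<in>Q1. l1 r \<in> Bq q r" "\<forall>r\<in>Q2. l2 r \<in> Hq q r"
    using assms(2) unfolding mem_Dq_iff by blast
  then have "atom_of (l1 r) \<in> atoms_prog P - {q}" if "r \<in> Q1" for r
    using atoms_Bq_subset[of r] assms(1) that by blast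
  moreover have "l2 r \<in> atoms_prog P - {q}" if "r \<in> Q2" for r
    using Hq_subset[of r] \<open>Q1 \<union> Q2 = Q\<close> \<open>\<forall>r\<in>Q2. l2 r \<in> Hq q r\<close> assms(1) that by blast
  ultimately show ?thesis
    unfolding D by (auto simp: image_Un image_image)
qed

lemma R_classes_mem:
  "r \<in> Rfree P q \<Longrightarrow> r \<in> P" "r \<in> R0 P q \<union> R2 P q \<Longrightarrow> r \<in> P"
  "r \<in> R1 P q \<union> R4 P q \<Longrightarrow> r \<in> P" "r \<in> R3 P q \<Longrightarrow> r \<in> P"
  unfolding R_classes_def by auto

lemma R_classes_Un_subset:
  "R0 P q \<union> R2 P q - {r} \<subseteq> P" "R1 P q \<union> R4 P q - {r} \<subseteq> P" "R3 P q \<union> R4 P q \<subseteq> P" "R4 P q \<subseteq> P"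
  unfolding R_classes_def by auto

lemma H_mem: "h \<in> H r \<Longrightarrow> r \<in> R0 P q \<union> R2 P q \<Longrightarrow> h \<in> atoms_prog P \<and> h \<noteq> q"
  using H_subset by blast

lemma Hq_mem: "h \<in> Hq q r \<Longrightarrow> r \<in> P \<Longrightarrow> h \<in> atoms_prog P \<and> h \<noteq> q"
  using Hq_subset by blast

lemma atoms_Rfree_subset: "r \<in> Rfree P q \<Longrightarrow> atoms_rule r \<subseteq> atoms_prog P - {q}"
  unfolding Rfree_def atoms_prog_def by blast

lemma atoms_fSP_rules_subset: "atoms_prog (fSP_rules P q) \<subseteq> atoms_prog P - {q}"
proof -
  have "\<forall>\<rho>\<in>fSP_rules P q. atoms_rule \<rho> \<subseteq> atoms_prog P - {q}"
    unfolding fSP_rules_def ball_Un S1a_def S2a_def S3a_def S1b_def S2b_def S3b_def S4_def S5_def S6_def S7_def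
    by (intro conjI ballI; (elim CollectE exE conjE)?;
        simp add: atoms_Rfree_subset atoms_rule_pair_subset_iff image_Un image_image R_classes_mem Hq_subset atoms_Bq_subset
        H_subset H_mem Hq_mem atoms_B_R4_subset atoms_Dq_subset[OF R_classes_Un_subset(1)]
        atoms_Dq_subset[OF R_classes_Un_subset(2)] atoms_Dq_subset[OF R_classes_Un_subset(3)]
        atoms_Dq_subset[OF R_classes_Un_subset(4)])
  then show ?thesis
    unfolding atoms_prog_def by blast
qed

end

lemma finite_rules_over:
  assumes "finite A"
  shows "finite {r. atoms_rule r \<subseteq> A}"
proof (rule finite_subset)
  show "{r. atoms_rule r \<subseteq> A} \<subseteq> Pow A \<times> Pow (LPos ` A \<union> LNot ` A \<union> LNotNot ` A)"
  proof
    fix r assume "r \<in> {r. atoms_rule r \<subseteq> A}"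
    moreover obtain Hd Bd where r: "r = (Hd, Bd)"
      by fastforce
    ultimately have "Hd \<subseteq> A" and atoms_Bd: "atom_of ` Bd \<subseteq> A"
      by (simp_all add: atoms_rule_pair_subset_iff)
    moreover have "Bd \<subseteq> LPos ` A \<union> LNot ` A \<union> LNotNot ` A"
    proof
      fix l assume "l \<in> Bd"
      then have "atom_of l \<in> A"
        using atoms_Bd by blast
      then show "l \<in> LPos ` A \<union> LNot ` A \<union> LNotNot ` A"
        by (cases l) auto
    qed
    ultimately show "r \<in> Pow A \<times> Pow (LPos ` A \<union> LNot ` A \<union> LNotNot ` A)"
      unfolding r by simp
  qed
  show "finite (Pow A \<times> Pow (LPos ` A \<union> LNot ` A \<union> LNotNot ` A))"
    using assms by simp
qed

lemma atoms_prog_NF_subset: "atoms_prog (NF P) \<subseteq> atoms_prog P"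
proof
  fix a assume "a \<in> atoms_prog (NF P)"
  then obtain r where "r \<in> P" and "a \<in> atoms_rule (nf_simp r)"
    unfolding NF_def Let_def atoms_prog_def by auto
  moreover have "atoms_rule (nf_simp r) \<subseteq> atoms_rule r"
    unfolding atoms_rule_eq H_nf_simp B_nf_simp by blast
  ultimately show "a \<in> atoms_prog P"
    unfolding atoms_prog_def by blast
qed

lemma ht_model_fSP_iff:
  assumes "is_program P"
  shows "ht_model X Y (fSP P q) \<longleftrightarrow> X \<subseteq> Y \<and> forgotten_ht_model P q (X - {q}) (Y - {q})"
proof -
  have "finite P" and "finite (atoms_prog P)"
    using assms finite_atoms_prog unfolding is_program_def by blast+
  have nf: "\<forall>r\<in>NF P. nf_rule r"
    using nf_rule_NF by blast
  have atoms: "atoms_prog (fSP_rules (NF P) q) \<subseteq> atoms_prog P - {q}"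
    using atoms_fSP_rules_subset[OF nf, of q] atoms_prog_NF_subset[of P] by blast
  then have "fSP_rules (NF P) q \<subseteq> {r. atoms_rule r \<subseteq> atoms_prog P - {q}}"
    unfolding atoms_prog_def by blast
  then have "finite (fSP_rules (NF P) q)"
    by (rule finite_subset) (simp add: finite_rules_over \<open>finite (atoms_prog P)\<close>)
  then have "ht_model X Y (fSP P q) \<longleftrightarrow> ht_model X Y (fSP_rules (NF P) q)"
    unfolding fSP_unfold by (rule ht_model_NF)
  also have "\<dots> \<longleftrightarrow> X \<subseteq> Y \<and> ht_model (X - {q}) (Y - {q}) (fSP_rules (NF P) q)"
  proof (cases "X \<subseteq> Y")
    case True
    have "atoms_prog (fSP_rules (NF P) q) \<subseteq> - {q}"
      using atoms by blast
    from ht_model_restrict[OF this True] show ?thesis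
      using True by (simp add: Diff_eq)
  qed (simp add: ht_model_iff)
  also have "\<dots> \<longleftrightarrow> X \<subseteq> Y \<and> forgotten_ht_model (NF P) q (X - {q}) (Y - {q})"
  proof (cases "X \<subseteq> Y")
    case True
    then interpret forget_setting "NF P" q "X - {q}" "Y - {q}"
      using nf by unfold_locales blast+
    show ?thesis
      using ht_model_fSP_rules_iff by simp
  qed simp
  also have "\<dots> \<longleftrightarrow> X \<subseteq> Y \<and> forgotten_ht_model P q (X - {q}) (Y - {q})"
    using forgotten_ht_model_cong[OF ht_model_NF[OF \<open>finite P\<close>]] by simp
  finally show ?thesis .
qed

theorem proposition5:
  fixes P P' :: "'a rule set" and q :: 'a
  assumes "is_program P" and "is_program P'"
    and "strongly_equivalent P P'"
  shows "strongly_equivalent (fSP P q) (fSP P' q)"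
proof (rule strongly_equivalent_if_same_ht_models)
  fix X Y
  have same_models: "ht_model X Y P \<longleftrightarrow> ht_model X Y P'" for X Y
    using ht_model_if_strongly_equivalent[OF assms(3,1,2)] .
  show "ht_model X Y (fSP P q) \<longleftrightarrow> ht_model X Y (fSP P' q)"
    unfolding ht_model_fSP_iff[OF assms(1)] ht_model_fSP_iff[OF assms(2)]
      forgotten_ht_model_cong[OF same_models] ..
qed

end
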